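(* Assume $r\in\mathbb Z$, and let $\nu,p\in\mathbb Z_{\ge1}$ satisfy $r=1-2\nu+p$. Then $(\det\mathbf V_p)^{\nu}\mathbf 1$ is a singular vector of $M_r^{(1)}$, i.e. $v(m,n)(\det\mathbf V_p)^\nu\mathbf 1=0$ for all $m,n\in\mathbb Z$ with $m+n>0$. Consequently the $\mathcal L_r^{(1)}$-module $M_r^{(1)}$ is reducible.
   Context: Fix an integer $d\ge 2$ and $r\in\mathbb{C}$. Let $\hat{\mathfrak h}$ be the complex Lie algebra with basis $\{v^i(m)\mid 1\le i\le d,\ m\in\mathbb{Z}\}\cup\{\mathbf c\}$ and bracket $[v^i(m),v^j(n)]=\delta_{m+n,0}\delta_{i,j}\,m\,\mathbf c$, $[\mathbf c,\hat{\mathfrak h}]=0$. In $A=U(\hat{\mathfrak h})/\langle \mathbf c-1\rangle$ let $v^{ij}(m,n)$ be the image of $v^i(m)v^j(n)$; then $v^{ij}(m,n)=v^{ji}(n,m)$ unless $i=j$ and $m=-n$, and $v^{ii}(m,-m)=v^{ii}(-m,m)+m$. Let $\mathcal B=\{v^{ii}(m,n)\mid 1\le i\le d,\ m\le n\}\cup\{v^{ij}(m,n)\mid 1\le i<j\le d,\ m,n\in\mathbb Z\}$; then $\mathcal B\cup\{1\}$ is linearly independent, $\mathcal L:=\mathrm{span}_{\mathbb C}\mathcal B\oplus\mathbb C\subset A$ contains every $v^{ij}(m,n)$ and is closed under $[x,y]=xy-yx$. With $\pi_1,\pi_2$ the projections of $\mathcal L$ onto $\mathrm{span}\,\mathcal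 B$ and onto $\mathbb C$, $[x,y]_r=\pi_1([x,y])+r\pi_2([x,y])$ is a Lie bracket on $\mathcal L$; call this Lie algebra $\mathcal L_r$. Let $\mathcal B_+=\{v^{ij}(m,n)\in\mathcal B\mid m\ge 0\text{ or }n\ge 0\}$, $\mathcal L_r^+=\mathrm{span}\,\mathcal B_+\oplus\mathbb C$, and $M_r=U(\mathcal L_r)\otimes_{U(\mathcal L_r^+)}\mathbb C\mathbf 1$, where $\mathcal B_+$ acts by $0$ on $\mathbf 1$ and $s\in\mathbb C\subset\mathcal L_r$ acts by the scalar $s$. Let $\mathcal L_r^{(1)}$ be the Lie subalgebra of $\mathcal L_r$ generated by $\{v^{11}(m,n)\mid m,n\in\mathbb Z,\ m\le n\}$ and $M_r^{(1)}=U(\mathcal L_r^{(1)})\mathbf 1\subset M_r$. Write $v(m,n)=v^{11}(m,n)$. The elements $v(-s,-t)$ with $s,t>0$ pairwise commute in $U(\mathcal L_r)$, so for $p\ge1$ the determinant $\det\mathbf V_p=\sum_{\sigma\in\mathfrak S_p}\mathrm{sgn}(\sigma)\prod_{q=1}^p v(-q,-\sigma(q))\in U(\mathcal L_r^{(1)})$ of the $p\times p$ matrix $\mathbf V_p=(v(-s,-t))_{1\le s,t\le p}$ is well defined. *)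

theory Defs
  imports Complex_Main "HOL-Library.Multiset" "HOL-Library.Product_Lexorder"
    "HOL-Combinatorics.Permutations"
begin

text \<open>A key (i,j,m,n) stands for the element v^{ij}(m,n) of the Lie algebra L_r.
  Modules over L_r are given by the operators rho (i,j,m,n) on a complex vector space
  (scalar multiplication sc); constants s in C act as multiplication by s.\<close>

type_synonym key = "nat \<times> nat \<times> int \<times> int"

definition Keys :: "nat \<Rightarrow> key set" where
  "Keys d = {(i,j,m,n). 1 \<le> i \<and> i \<le> d \<and> 1 \<le> j \<and> j \<le> d}"

text \<open>Keys of the basis B (normal forms).\<close>
definition Bnorm :: "nat \<Rightarrow> key set" where
  "Bnorm d = {(i,j,m,n). (i,j,m,n) \<in> Keys d \<and> (i < j \<or> (i = j \<and> m \<le> n))}"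

definition Bplus :: "nat \<Rightarrow> key set" where
  "Bplus d = {(i,j,m,n). (i,j,m,n) \<in> Bnorm d \<and> (m \<ge> 0 \<or> n \<ge> 0)}"

definition Bminus :: "nat \<Rightarrow> key set" where
  "Bminus d = {(i,j,m,n). (i,j,m,n) \<in> Bnorm d \<and> m < 0 \<and> n < 0}"

text \<open>Constant part (projection pi_2) of v^{ab}(x,y) written in the basis B u {1}:
  v^{aa}(x,-x) = v^{aa}(-x,x) + x for x > 0.\<close>
definition cst :: "key \<Rightarrow> int" where
  "cst k = (case k of (a,b,x,y) \<Rightarrow> if a = b \<and> x + y = 0 \<and> x > 0 then x else 0)"

text \<open>Action of pi_1(v^{ab}(x,y)) + r pi_2(v^{ab}(x,y)), i.e. of the element v^{ab}(x,y)
  with its constant part rescaled by r, as happens in the bracket [_,_]_r.\<close>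
definition rho_r :: "complex \<Rightarrow> (complex \<Rightarrow> 'v \<Rightarrow> 'v) \<Rightarrow> (key \<Rightarrow> 'v \<Rightarrow> 'v) \<Rightarrow> key \<Rightarrow> 'v \<Rightarrow> 'v::ab_group_add" where
  "rho_r r sc \<rho> k x = \<rho> k x + sc ((r - 1) * of_int (cst k)) x"

definition dlt :: "bool \<Rightarrow> int \<Rightarrow> complex" where
  "dlt b c = (if b then of_int c else 0)"

text \<open>rho is a representation of L_r (with constants acting as scalars):
  linearity, the identities v^{ij}(m,n) = v^{ji}(n,m) (+ m if i = j, m = -n) in L,
  and [v^{ij}(m,n), v^{kl}(p,q)]_r computed from the Heisenberg relations.\<close>
definition Lr_module :: "nat \<Rightarrow> complex \<Rightarrow> (complex \<Rightarrow> 'v \<Rightarrow> 'v) \<Rightarrow> (key \<Rightarrow> 'v \<Rightarrow> 'v::ab_group_add) \<Rightarrow> bool" where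
  "Lr_module d r sc \<rho> \<longleftrightarrow>
     vector_space sc \<and>
     (\<forall>k\<in>Keys d. Vector_Spaces.linear sc sc (\<rho> k)) \<and>
     (\<forall>i j m n x. (i,j,m,n) \<in> Keys d \<longrightarrow>
        \<rho> (i,j,m,n) x = \<rho> (j,i,n,m) x + sc (if i = j \<and> m + n = 0 then of_int m else 0) x) \<and>
     (\<forall>i j m n k l p q x. (i,j,m,n) \<in> Keys d \<longrightarrow> (k,l,p,q) \<in> Keys d \<longrightarrow>
        \<rho> (i,j,m,n) (\<rho> (k,l,p,q) x) - \<rho> (k,l,p,q) (\<rho> (i,j,m,n) x) =
          sc (dlt (j = k \<and> n + p = 0) n) (rho_r r sc \<rho> (i,l,m,q) x)
        + sc (dlt (j = l \<and> n + q = 0) n) (rho_r r sc \<rho> (i,k,m,p) x)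
        + sc (dlt (i = k \<and> m + p = 0) m) (rho_r r sc \<rho> (l,j,q,n) x)
        + sc (dlt (i = l \<and> m + q = 0) m) (rho_r r sc \<rho> (k,j,p,n) x))"

text \<open>Apply the product of the operators of a list of keys (first element leftmost).\<close>
definition opw :: "(key \<Rightarrow> 'v \<Rightarrow> 'v) \<Rightarrow> key list \<Rightarrow> 'v \<Rightarrow> 'v" where
  "opw \<rho> ks x = foldr \<rho> ks x"

text \<open>(V, rho, w) is (isomorphic to) the induced module
  M_r = U(L_r) (x)_{U(L_r^+)} C 1 with 1 = w: w is annihilated by B_+, w generates V,
  and the PBW monomials in B_- applied to w are linearly independent
  (M_r is free of rank one over U(span B_-)).\<close>
definition Mr_model :: "nat \<Rightarrow> complex \<Rightarrow> (complex \<Rightarrow> 'v \<Rightarrow> 'v) \<Rightarrow> (key \<Rightarrow> 'v \<Rightarrow> 'v::ab_group_add) \<Rightarrow> 'v \<Rightarrow> bool" where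
  "Mr_model d r sc \<rho> w \<longleftrightarrow>
     Lr_module d r sc \<rho> \<and>
     (\<forall>k\<in>Bplus d. \<rho> k w = 0) \<and>
     (\<forall>W. module.subspace sc W \<and> w \<in> W \<and> (\<forall>k\<in>Keys d. \<forall>x\<in>W. \<rho> k x \<in> W) \<longrightarrow> W = UNIV) \<and>
     (\<forall>S c. finite S \<and> (\<forall>M\<in>S. set_mset M \<subseteq> Bminus d) \<and>
        (\<Sum>M\<in>S. sc (c M) (opw \<rho> (sorted_list_of_multiset M) w)) = 0 \<longrightarrow> (\<forall>M\<in>S. c M = 0))"

text \<open>M_r^{(1)} = U(L_r^{(1)}) 1: the smallest subspace containing w and stable under the
  generators v^{11}(m,n), m \<le> n, of L_r^{(1)}.\<close>
definition stable1 :: "(key \<Rightarrow> 'v \<Rightarrow> 'v) \<Rightarrow> 'v set \<Rightarrow> bool" where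
  "stable1 \<rho> W \<longleftrightarrow> (\<forall>m n x. m \<le> n \<longrightarrow> x \<in> W \<longrightarrow> \<rho> (1,1,m,n) x \<in> W)"

definition Mone :: "(complex \<Rightarrow> 'v \<Rightarrow> 'v) \<Rightarrow> (key \<Rightarrow> 'v \<Rightarrow> 'v::ab_group_add) \<Rightarrow> 'v \<Rightarrow> 'v set" where
  "Mone sc \<rho> w = \<Inter>{W. module.subspace sc W \<and> w \<in> W \<and> stable1 \<rho> W}"

definition reducible1 :: "(complex \<Rightarrow> 'v \<Rightarrow> 'v) \<Rightarrow> (key \<Rightarrow> 'v \<Rightarrow> 'v::ab_group_add) \<Rightarrow> 'v set \<Rightarrow> bool" where
  "reducible1 sc \<rho> U \<longleftrightarrow>
     (\<exists>W. module.subspace sc W \<and> W \<subseteq> U \<and> stable1 \<rho> W \<and> W \<noteq> {0} \<and> W \<noteq> U)"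

definition detV :: "(complex \<Rightarrow> 'v \<Rightarrow> 'v) \<Rightarrow> (key \<Rightarrow> 'v \<Rightarrow> 'v::ab_group_add) \<Rightarrow> nat \<Rightarrow> 'v \<Rightarrow> 'v" where
  "detV sc \<rho> p x = (\<Sum>\<sigma>\<in>{\<sigma>. \<sigma> permutes {1..p}}.
      sc (of_int (sign \<sigma>)) (opw \<rho> (map (\<lambda>q. (1, 1, - int q, - int (\<sigma> q))) [1..<p+1]) x))"

end

theory Submission
  imports Defs
begin

text \<open>
  Write D for det V_p and u_i = D^i 1. The operators v(m,-l), 1 \<le> l, m \<le> p, act on the
  entries v(-s,-t) of V_p as gl_p acts on a symmetric matrix, so D is a weight vector for them:
  [v(m,-l), D] = 2m \<delta>_{lm} D, and u_i is an eigenvector of v(m,-m) with eigenvalue m(2i+1)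
  that is killed by v(m,-l) for l \<noteq> m. Commuting the raising operator v(m,m) through D
  produces the (m,m) cofactor of V_p; combined with the eigenvalues this gives
  v(m,m) u_{i+1} = 2m^2 (i+1)(r + 2(i+1) - p - 1) \<cdot> cofactor_m(u_i), which vanishes for
  i + 1 = \<nu> exactly when r = 1 - 2\<nu> + p. The remaining v(m,n) with m + n > 0 are either
  among the v(m,-l), commute with the entries of V_p up to operators killing every u_i, or
  are obtained from v(b,b) by a commutator with v(a,-b).

  The span of words in the v(a,b) with a + b < 0 applied to u_\<nu> is then a submodule. It is
  nonzero because the PBW monomials in B_- are linearly independent and the monomial
  \<Prod>_q v(-q,-q)^\<nu> occurs in u_\<nu> with coefficient 1, and it does not contain 1 because it
  lies in the span of the monomials of positive degree.
\<close>

section \<open>The generators v(m,n) of L_r^{(1)}\<close>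

declare One_nat_def [simp del]

locale induced_module =
  fixes d :: nat and r :: complex and sc :: "complex \<Rightarrow> 'v::ab_group_add \<Rightarrow> 'v"
    and \<rho> :: "key \<Rightarrow> 'v \<Rightarrow> 'v" and w :: 'v
  assumes model: "Mr_model d r sc \<rho> w" and dim_pos: "1 \<le> d"
begin

lemma Lr_module: "Lr_module d r sc \<rho>"
  by (rule model[unfolded Mr_model_def, THEN conjunct1])

sublocale vs: vector_space sc
  by (rule Lr_module[unfolded Lr_module_def, THEN conjunct1])

lemma vs_eq_neg_self:
  fixes x :: 'v
  assumes "x = - x"
  shows "x = 0"
proof -
  note \<open>x = - x\<close>
  then have "sc 2 x = 0" by (metis add.right_inverse one_add_one vs.scale_left_distrib vs.scale_one)
  then show "x = 0" by simp
qed

lemma scale_commute: "sc a (sc b x) = sc b (sc a x)"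
  by (metis mult.commute vs.scale_scale)

lemma key_11 [simp]: "(1,1,m,n) \<in> Keys d"
  using dim_pos unfolding Keys_def by simp

abbreviation v :: "int \<Rightarrow> int \<Rightarrow> 'v \<Rightarrow> 'v" where
  "v m n \<equiv> \<rho> (1,1,m,n)"

lemma linear_v: "Vector_Spaces.linear sc sc (v m n)"
  using Lr_module[unfolded Lr_module_def, THEN conjunct2, THEN conjunct1] key_11 by blast

lemma v_add: "v m n (x + y) = v m n x + v m n y"
  and v_scale: "v m n (sc c x) = sc c (v m n x)"
  and v_zero [simp]: "v m n 0 = 0"
  and v_sum: "v m n (sum f S) = (\<Sum>x\<in>S. v m n (f x))"
proof -
  interpret Vector_Spaces.linear sc sc "v m n" by (rule linear_v)
  show "v m n (x + y) = v m n x + v m n y" by (rule add)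
  show "v m n (sc c x) = sc c (v m n x)" by (rule scale)
  show "v m n 0 = 0" by (rule zero)
  show "v m n (sum f S) = (\<Sum>x\<in>S. v m n (f x))" by (rule sum)
qed

lemma v_span:
  assumes "\<And>g. g \<in> G \<Longrightarrow> v m n g \<in> vs.span H" and "x \<in> vs.span G"
  shows "v m n x \<in> vs.span H"
  using assms(2)
proof (induct rule: vs.span_induct_alt)
  case base then show ?case by (simp add: vs.span_zero)
next
  case (step c x y) then show ?case
    by (simp add: v_add v_scale vs.span_add vs.span_scale assms(1) vs.span_base)
qed

definition vr :: "int \<Rightarrow> int \<Rightarrow> 'v \<Rightarrow> 'v" where
  "vr m n = rho_r r sc \<rho> (1,1,m,n)"

lemma vr_eq: "vr m n x = v m n x + sc ((r - 1) * of_int (cst (1,1,m,n))) x"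
  unfolding vr_def rho_r_def by simp

lemma vr_eq_v: "m + n \<noteq> 0 \<or> m \<le> 0 \<Longrightarrow> vr m n x = v m n x"
  unfolding vr_eq cst_def by auto

lemma dlt_False [simp]: "dlt False c = 0"
  and dlt_True [simp]: "dlt True c = of_int c"
  unfolding dlt_def by simp_all

lemma v_commutator:
  "v m n (v p q x) = v p q (v m n x)
     + (sc (dlt (n + p = 0) n) (vr m q x) + sc (dlt (n + q = 0) n) (vr m p x)
      + sc (dlt (m + p = 0) m) (vr q n x) + sc (dlt (m + q = 0) m) (vr p n x))"
proof -
  have "v m n (v p q x) - v p q (v m n x) =
      sc (dlt (n + p = 0) n) (vr m q x) + sc (dlt (n + q = 0) n) (vr m p x)
    + sc (dlt (m + p = 0) m) (vr q n x) + sc (dlt (m + q = 0) m) (vr p n x)"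
    using Lr_module[unfolded Lr_module_def, THEN conjunct2, THEN conjunct2, THEN conjunct2,
        rule_format, OF key_11 key_11, of m n p q x]
    unfolding vr_def by (simp only: simp_thms)
  then show ?thesis by (simp only: diff_eq_eq add.assoc add.commute)
qed

lemma v_symmetric: "v m n x = v n m x + sc (if m + n = 0 then of_int m else 0) x"
  using Lr_module[unfolded Lr_module_def, THEN conjunct2, THEN conjunct2, THEN conjunct1,
      rule_format, OF key_11, of m n x] by simp

lemma v_swap: "m + n \<noteq> 0 \<Longrightarrow> v m n = v n m"
  using v_symmetric[of m n] by auto

lemma v_annihilates_w:
  assumes "m \<ge> 0 \<or> n \<ge> 0" "m + n \<noteq> 0"
  shows "v m n w = 0"
proof -
  have "(1,1,min m n,max m n) \<in> Bplus d"
    using assms dim_pos unfolding Bplus_def Bnorm_def Keys_def by auto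
  then have "v (min m n) (max m n) w = 0"
    using model[unfolded Mr_model_def, THEN conjunct2, THEN conjunct1] by blast
  then show ?thesis
    by (cases "m \<le> n") (simp_all add: min_def max_def v_swap[OF assms(2)])
qed

lemma v_zero_mode_w: "v m (- m) w = sc (of_int (max m 0)) w"
proof -
  have "(1,1,- \<bar>m\<bar>,\<bar>m\<bar>) \<in> Bplus d"
    using dim_pos unfolding Bplus_def Bnorm_def Keys_def by simp
  then have "v (- \<bar>m\<bar>) \<bar>m\<bar> w = 0"
    using model[unfolded Mr_model_def, THEN conjunct2, THEN conjunct1] by blast
  then show ?thesis
    using v_symmetric[of m "- m" w] by (cases "m \<le> 0") simp_all
qed

section \<open>Monomials in the negative modes\<close>

(* Indices are clamped at 1 so that all vneg a commute pairwise; only positive indices occur. *)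
definition vneg :: "nat \<times> nat \<Rightarrow> 'v \<Rightarrow> 'v" where
  "vneg a = v (- int (max 1 (fst a))) (- int (max 1 (snd a)))"

lemma vneg_add: "vneg a (x + y) = vneg a x + vneg a y"
  and vneg_scale: "vneg a (sc c x) = sc c (vneg a x)"
  and vneg_zero [simp]: "vneg a 0 = 0"
  and vneg_sum: "vneg a (sum f S) = (\<Sum>x\<in>S. vneg a (f x))"
  unfolding vneg_def by (rule v_add v_scale v_zero v_sum)+

lemma vneg_pos: "1 \<le> s \<Longrightarrow> 1 \<le> t \<Longrightarrow> vneg (s,t) = v (- int s) (- int t)"
  unfolding vneg_def by (simp add: max_def)

lemma vneg_commute: "vneg a (vneg b x) = vneg b (vneg a x)"
  unfolding vneg_def by (subst v_commutator) simp

lemma vneg_swap: "vneg (s, t) = vneg (t, s)"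
  unfolding vneg_def fst_conv snd_conv by (rule v_swap) simp

definition vmon :: "(nat \<times> nat) multiset \<Rightarrow> 'v \<Rightarrow> 'v" where
  "vmon M = fold_mset (\<lambda>a f. vneg a \<circ> f) id M"

lemma comp_fun_commute_vneg: "comp_fun_commute (\<lambda>a f. vneg a \<circ> f)"
  by unfold_locales (auto simp: fun_eq_iff vneg_commute)

lemma vmon_empty [simp]: "vmon {#} x = x"
  unfolding vmon_def by simp

lemma vmon_add_mset [simp]: "vmon (add_mset a M) x = vneg a (vmon M x)"
  unfolding vmon_def by (simp add: comp_fun_commute.fold_mset_add_mset[OF comp_fun_commute_vneg])

lemma vneg_vmon: "vneg a (vmon M x) = vmon M (vneg a x)"
  by (induct M arbitrary: x) (simp_all add: vneg_commute)

lemma vmon_union: "vmon (M + N) x = vmon M (vmon N x)"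
  by (induct M arbitrary: x) simp_all

lemma vmon_commute: "vmon M (vmon N x) = vmon N (vmon M x)"
  by (metis vmon_union add.commute)

lemma vmon_add: "vmon M (x + y) = vmon M x + vmon M y"
  and vmon_scale: "vmon M (sc c x) = sc c (vmon M x)"
  and vmon_zero [simp]: "vmon M 0 = 0"
  by (induct M arbitrary: x y) (simp_all add: vneg_add vneg_scale)

lemma vmon_sum: "vmon M (sum f S) = (\<Sum>x\<in>S. vmon M (f x))"
  by (induct S rule: infinite_finite_induct) (simp_all add: vmon_add)

lemma vmon_swap: "vmon (image_mset prod.swap M) x = vmon M x"
  by (induct M arbitrary: x) (auto simp: vneg_swap)

lemma vmon_cong: "(\<And>a. a \<in># M \<Longrightarrow> vneg (f a) = vneg a) \<Longrightarrow> vmon (image_mset f M) x = vmon M x"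
  by (induct M arbitrary: x) simp_all

lemma commute_vmon:
  assumes "\<And>a x. a \<in># M \<Longrightarrow> T (vneg a x) = vneg a (T x)"
  shows "T (vmon M x) = vmon M (T x)"
  using assms by (induct M arbitrary: x) simp_all

definition vperm :: "(nat \<Rightarrow> nat) \<Rightarrow> nat set \<Rightarrow> 'v \<Rightarrow> 'v" where
  "vperm \<sigma> S = vmon (image_mset (\<lambda>q. (q, \<sigma> q)) (mset_set S))"

lemma vperm_insert: "finite S \<Longrightarrow> q \<notin> S \<Longrightarrow> vperm \<sigma> (insert q S) x = vneg (q, \<sigma> q) (vperm \<sigma> S x)"
  unfolding vperm_def by simp

lemma vperm_remove: "finite S \<Longrightarrow> q \<in> S \<Longrightarrow> vperm \<sigma> S x = vneg (q, \<sigma> q) (vperm \<sigma> (S - {q}) x)"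
  by (metis vperm_insert finite_Diff insert_Diff Diff_iff singletonI)

lemma vperm_cong: "(\<And>q. q \<in> S \<Longrightarrow> \<sigma> q = \<tau> q) \<Longrightarrow> vperm \<sigma> S = vperm \<tau> S"
  unfolding vperm_def by (cases "finite S") (auto intro!: arg_cong[where f=vmon] image_mset_cong)

lemma vperm_add: "vperm \<sigma> S (x + y) = vperm \<sigma> S x + vperm \<sigma> S y"
  and vperm_scale: "vperm \<sigma> S (sc c x) = sc c (vperm \<sigma> S x)"
  and vperm_zero [simp]: "vperm \<sigma> S 0 = 0"
  unfolding vperm_def by (simp_all add: vmon_add vmon_scale)

lemma commute_vperm:
  "finite S \<Longrightarrow> (\<And>q x. q \<in> S \<Longrightarrow> T (vneg (q, \<sigma> q) x) = vneg (q, \<sigma> q) (T x)) \<Longrightarrow>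
    T (vperm \<sigma> S x) = vperm \<sigma> S (T x)"
  unfolding vperm_def by (rule commute_vmon) auto

lemma vperm_leibniz:
  assumes "finite S"
    and T: "\<And>q x. q \<in> S \<Longrightarrow> T (vneg (q, \<sigma> q) x) = vneg (q, \<sigma> q) (T x) + F q x"
    and F: "\<And>q N x. q \<in> S \<Longrightarrow> F q (vmon N x) = vmon N (F q x)"
  shows "T (vperm \<sigma> S x) = vperm \<sigma> S (T x) + (\<Sum>q\<in>S. vperm \<sigma> (S - {q}) (F q x))"
  using assms
proof (induct S arbitrary: x rule: finite_induct)
  case empty then show ?case by (simp add: vperm_def)
next
  case (insert q S)
  have IH: "T (vperm \<sigma> S y) = vperm \<sigma> S (T y) + (\<Sum>q\<in>S. vperm \<sigma> (S - {q}) (F q y))" for y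
    using insert by auto
  have remove: "vneg (q, \<sigma> q) (vperm \<sigma> (S - {q'}) y) = vperm \<sigma> (insert q S - {q'}) y" if "q' \<in> S" for q' y
  proof -
    have "q \<noteq> q'" using insert that by blast
    then show ?thesis using insert by (simp add: vperm_insert insert_Diff_if)
  qed
  have "T (vperm \<sigma> (insert q S) x) = vneg (q, \<sigma> q) (T (vperm \<sigma> S x)) + F q (vperm \<sigma> S x)"
    using insert by (simp add: vperm_insert)
  also have "F q (vperm \<sigma> S x) = vperm \<sigma> S (F q x)"
    unfolding vperm_def using insert by simp
  also have "vneg (q, \<sigma> q) (T (vperm \<sigma> S x)) =
      vperm \<sigma> (insert q S) (T x) + (\<Sum>q'\<in>S. vperm \<sigma> (insert q S - {q'}) (F q' x))"
    using insert by (simp add: IH vneg_add vneg_sum remove vperm_insert)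
  finally show ?case using insert by (simp add: add.commute add.left_commute)
qed

lemma opw_Nil [simp]: "opw \<rho> [] x = x"
  and opw_Cons [simp]: "opw \<rho> (k # ks) x = \<rho> k (opw \<rho> ks x)"
  unfolding opw_def by simp_all

section \<open>PBW monomials and the degree grading\<close>

definition neg_key :: "key \<Rightarrow> bool" where
  "neg_key k \<longleftrightarrow> (\<exists>s t. k = (1,1,s,t) \<and> s < 0 \<and> t < 0)"

definition key_index :: "key \<Rightarrow> nat \<times> nat" where
  "key_index k = (case k of (i,j,s,t) \<Rightarrow> (nat (- s), nat (- t)))"

(* The element of B_- equal to vneg a: modes ordered as in B, indices clamped as in vneg. *)
definition index_key :: "nat \<times> nat \<Rightarrow> key" where
  "index_key a = (1, 1, - int (max 1 (max (fst a) (snd a))), - int (max 1 (min (fst a) (snd a))))"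

definition pbw :: "key multiset \<Rightarrow> 'v" where
  "pbw M = opw \<rho> (sorted_list_of_multiset M) w"

lemma vneg_key_index: "neg_key k \<Longrightarrow> vneg (key_index k) = \<rho> k"
  unfolding neg_key_def key_index_def vneg_def by auto

lemma opw_neg_keys: "(\<And>k. k \<in> set ks \<Longrightarrow> neg_key k) \<Longrightarrow> opw \<rho> ks x = vmon (mset (map key_index ks)) x"
  by (induct ks) (simp_all add: vneg_key_index)

lemma neg_key_index_key: "neg_key (index_key a)"
  unfolding neg_key_def index_key_def by auto

lemma index_key_Bminus: "index_key a \<in> Bminus d"
  unfolding index_key_def Bminus_def Bnorm_def Keys_def using dim_pos by auto

lemma vneg_clamp: "vneg (max 1 s, max 1 t) = vneg (s, t)"
  unfolding vneg_def by simp

lemma vneg_index_key: "vneg (key_index (index_key a)) = vneg a"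
proof -
  obtain s t where a: "a = (s, t)" by (cases a)
  show ?thesis
  proof (cases "s \<le> t")
    case True
    then have "key_index (index_key a) = (max 1 t, max 1 s)"
      unfolding a index_key_def key_index_def by (simp add: max_absorb2 min_absorb1)
    then show ?thesis unfolding a by (simp add: vneg_clamp vneg_swap[of t s])
  next
    case False
    then have "key_index (index_key a) = (max 1 s, max 1 t)"
      unfolding a index_key_def key_index_def by (simp add: max_absorb1 min_absorb2)
    then show ?thesis unfolding a by (simp add: vneg_clamp)
  qed
qed

lemma pbw_index_key: "pbw (image_mset index_key M) = vmon M w"
proof -
  have "pbw (image_mset index_key M) = vmon (image_mset key_index (image_mset index_key M)) w"
    unfolding pbw_def by (subst opw_neg_keys) (auto simp: neg_key_index_key)
  also have "image_mset key_index (image_mset index_key M) = image_mset (key_index \<circ> index_key) M"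
    by (simp add: image_mset.compositionality)
  also have "vmon \<dots> w = vmon M w"
    by (rule vmon_cong) (simp add: vneg_index_key)
  finally show ?thesis .
qed

lemma pbw_independent:
  assumes "finite S" "\<And>M. M \<in> S \<Longrightarrow> set_mset M \<subseteq> Bminus d"
    and "(\<Sum>M\<in>S. sc (c M) (pbw M)) = 0" "M \<in> S"
  shows "c M = 0"
  using model[unfolded Mr_model_def, THEN conjunct2, THEN conjunct2, THEN conjunct2] assms
  unfolding pbw_def by blast

lemma inj_on_pbw: "inj_on pbw {M. set_mset M \<subseteq> Bminus d}"
proof (rule inj_onI, rule ccontr)
  fix M N assume M: "M \<in> {M. set_mset M \<subseteq> Bminus d}" and N: "N \<in> {M. set_mset M \<subseteq> Bminus d}"
    and eq: "pbw M = pbw N" and ne: "M \<noteq> N"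
  let ?c = "\<lambda>K. if K = M then 1 else - 1 :: complex"
  have "(\<Sum>K\<in>{M, N}. sc (?c K) (pbw K)) = 0"
    using ne eq by simp
  then have "?c M = 0"
    by (rule pbw_independent[rotated 2]) (use M N in auto)
  then show False by simp
qed

lemma independent_pbw: "vs.independent (pbw ` {M. set_mset M \<subseteq> Bminus d})"
  unfolding vs.independent_explicit_module
proof (intro allI impI)
  fix T u z assume T: "finite T" "T \<subseteq> pbw ` {M. set_mset M \<subseteq> Bminus d}"
    and sum: "(\<Sum>z\<in>T. sc (u z) z) = 0" and z: "z \<in> T"
  obtain S where S: "S \<subseteq> {M. set_mset M \<subseteq> Bminus d}" "T = pbw ` S"
    using T(2) by (auto simp: subset_image_iff)
  have inj: "inj_on pbw S" using inj_on_pbw S(1) by (rule inj_on_subset)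
  obtain M where M: "M \<in> S" "z = pbw M" using z S(2) by blast
  have "(\<Sum>K\<in>S. sc (u (pbw K)) (pbw K)) = 0"
    using sum unfolding S(2) sum.reindex[OF inj] by simp
  then have "u (pbw M) = 0"
    by (rule pbw_independent[rotated 2]) (use T(1) S inj M in \<open>auto simp: finite_image_iff\<close>)
  then show "u z = 0" using M by simp
qed

lemma w_notin_span_pbw: "w \<notin> vs.span (pbw ` {M. set_mset M \<subseteq> Bminus d \<and> M \<noteq> {#}})"
proof -
  let ?B = "{M. set_mset M \<subseteq> Bminus d}"
  have w: "pbw {#} = w" unfolding pbw_def by simp
  have "pbw ` {M. set_mset M \<subseteq> Bminus d \<and> M \<noteq> {#}} = pbw ` ?B - {pbw {#}}"
    using inj_on_pbw by (auto simp: inj_on_eq_iff)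
  moreover have "\<forall>z\<in>pbw ` ?B. z \<notin> vs.span (pbw ` ?B - {z})"
    using independent_pbw unfolding vs.dependent_def by simp
  moreover have "pbw {#} \<in> pbw ` ?B" by (intro imageI) simp
  ultimately have "pbw {#} \<notin> vs.span (pbw ` {M. set_mset M \<subseteq> Bminus d \<and> M \<noteq> {#}})"
    by simp
  then show ?thesis by (metis w)
qed

definition weight :: "(nat \<times> nat) multiset \<Rightarrow> nat" where
  "weight M = (\<Sum>a\<in>#M. max 1 (fst a) + max 1 (snd a))"

definition deg_span :: "int \<Rightarrow> 'v set" where
  "deg_span N = vs.span {vmon M w | M. int (weight M) = N}"

definition word_span :: "'v set" where
  "word_span = vs.span (range (\<lambda>M. vmon M w))"

definition word_span_pos :: "'v set" where
  "word_span_pos = vs.span {vmon M w | M. M \<noteq> {#}}"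

lemma weight_add_mset [simp]: "weight (add_mset a M) = max 1 (fst a) + max 1 (snd a) + weight M"
  unfolding weight_def by simp

lemma vmon_deg_span: "int (weight M) = N \<Longrightarrow> vmon M w \<in> deg_span N"
  unfolding deg_span_def by (rule vs.span_base) blast

lemma vneg_deg_span:
  assumes "x \<in> deg_span N"
  shows "vneg a x \<in> deg_span (N + int (max 1 (fst a)) + int (max 1 (snd a)))"
  using assms unfolding deg_span_def vneg_def
proof (rule v_span[rotated])
  fix g assume "g \<in> {vmon M w | M. int (weight M) = N}"
  then obtain M where "g = vmon M w" "int (weight M) = N" by blast
  then show "v (- int (max 1 (fst a))) (- int (max 1 (snd a))) g
      \<in> vs.span {vmon M w | M. int (weight M) = N + int (max 1 (fst a)) + int (max 1 (snd a))}"
    using vmon_deg_span[of "add_mset a M" "N + int (max 1 (fst a)) + int (max 1 (snd a))"]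
    unfolding deg_span_def by (simp add: vneg_def)
qed

lemma scale_dlt_deg_span: "(P \<Longrightarrow> z \<in> deg_span N) \<Longrightarrow> sc (dlt P c) z \<in> deg_span N"
  by (cases P) (simp_all add: deg_span_def vs.span_scale vs.span_zero)

lemma vr_deg_span:
  assumes v_z: "\<And>m n. v m n z \<in> deg_span (e - m - n)" and z: "z \<in> deg_span e"
    and N: "N = e - m - n"
  shows "vr m n z \<in> deg_span N"
proof -
  have "sc ((r - 1) * of_int (cst (1,1,m,n))) z \<in> deg_span N"
  proof (cases "m + n = 0")
    case True
    then have "N = e" using N by simp
    then show ?thesis using z unfolding deg_span_def by (simp add: vs.span_scale)
  next
    case False then show ?thesis by (simp add: cst_def deg_span_def vs.span_zero)
  qed
  then show ?thesis unfolding vr_eq N using v_z[of m n] by (simp add: deg_span_def vs.span_add)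
qed

lemma v_w_deg_span: "v m n w \<in> deg_span (- m - n)"
proof -
  consider "m < 0 \<and> n < 0" | "m + n = 0" | "(m \<ge> 0 \<or> n \<ge> 0) \<and> m + n \<noteq> 0" by linarith
  then show ?thesis
  proof cases
    case 1
    have "vneg (nat (- m), nat (- n)) = v m n" using 1 by (subst vneg_pos) auto
    moreover have "vmon {#(nat (- m), nat (- n))#} w \<in> deg_span (- m - n)"
      using 1 by (intro vmon_deg_span) (auto simp: weight_def max_def)
    ultimately show ?thesis by simp
  next
    case 2
    have "w \<in> deg_span 0" using vmon_deg_span[of "{#}"] by (simp add: weight_def)
    then show ?thesis using 2 v_zero_mode_w[of m]
      by (simp add: eq_neg_iff_add_eq_0[symmetric] deg_span_def vs.span_scale)
  next
    case 3 then show ?thesis by (simp add: v_annihilates_w deg_span_def vs.span_zero)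
  qed
qed

lemma v_vmon_deg_span: "v m n (vmon M w) \<in> deg_span (int (weight M) - m - n)"
proof (induct M arbitrary: m n)
  case empty then show ?case using v_w_deg_span by (simp add: weight_def)
next
  case (add a M)
  define s where "s = - int (max 1 (fst a))"
  define t where "t = - int (max 1 (snd a))"
  let ?z = "vmon M w" and ?e = "int (weight M)"
  let ?N = "?e - m - n - s - t"
  have z: "?z \<in> deg_span ?e" by (rule vmon_deg_span) simp
  have vr_z: "vr k l ?z \<in> deg_span N" if "N = ?e - k - l" for k l N
    using add z that by (rule vr_deg_span)
  have "v m n (vmon (add_mset a M) w) = v s t (v m n ?z)
     + (sc (dlt (n + s = 0) n) (vr m t ?z) + sc (dlt (n + t = 0) n) (vr m s ?z)
     + sc (dlt (m + s = 0) m) (vr t n ?z) + sc (dlt (m + t = 0) m) (vr s n ?z))"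
    unfolding vmon_add_mset vneg_def s_def t_def by (rule v_commutator)
  also have "\<dots> \<in> deg_span ?N"
  proof -
    have "v s t (v m n ?z) \<in> deg_span ?N"
      using vneg_deg_span[OF add[of m n], of a] by (simp add: s_def t_def vneg_def algebra_simps)
    moreover have "sc (dlt (n + s = 0) n) (vr m t ?z) \<in> deg_span ?N"
      "sc (dlt (n + t = 0) n) (vr m s ?z) \<in> deg_span ?N"
      "sc (dlt (m + s = 0) m) (vr t n ?z) \<in> deg_span ?N"
      "sc (dlt (m + t = 0) m) (vr s n ?z) \<in> deg_span ?N"
      by (rule scale_dlt_deg_span, rule vr_z, simp)+
    ultimately show ?thesis unfolding deg_span_def by (simp add: vs.span_add)
  qed
  finally show ?case by (simp add: s_def t_def algebra_simps)
qed

lemma deg_span_subset_word_span_pos: "0 < N \<Longrightarrow> deg_span N \<subseteq> word_span_pos"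
  unfolding deg_span_def word_span_pos_def
  by (rule vs.span_mono) (auto simp: weight_def)

lemma word_span_pos_subset: "word_span_pos \<subseteq> word_span"
  unfolding word_span_pos_def word_span_def by (rule vs.span_mono) blast

lemma w_in_word_span: "w \<in> word_span"
  unfolding word_span_def by (rule vs.span_base) (metis rangeI vmon_empty)

lemma v_word_span_pos: "m + n < 0 \<Longrightarrow> x \<in> word_span \<Longrightarrow> v m n x \<in> word_span_pos"
  unfolding word_span_def word_span_pos_def
proof (rule v_span[rotated])
  fix g assume "m + n < 0" "g \<in> range (\<lambda>M. vmon M w)"
  then show "v m n g \<in> vs.span {vmon M w | M. M \<noteq> {#}}"
    using v_vmon_deg_span deg_span_subset_word_span_pos unfolding word_span_pos_def by force
qed

lemma vneg_word_span_pos: "x \<in> word_span \<Longrightarrow> vneg a x \<in> word_span_pos"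
  unfolding vneg_def by (rule v_word_span_pos) auto

lemma vmon_word_span: "x \<in> word_span \<Longrightarrow> vmon M x \<in> word_span"
  by (induct M) (use vneg_word_span_pos word_span_pos_subset in auto)

lemma w_notin_word_span_pos: "w \<notin> word_span_pos"
proof -
  have "{vmon M w | M. M \<noteq> {#}} \<subseteq> pbw ` {M. set_mset M \<subseteq> Bminus d \<and> M \<noteq> {#}}"
  proof
    fix x assume "x \<in> {vmon M w | M. M \<noteq> {#}}"
    then obtain M where "x = pbw (image_mset index_key M)" "M \<noteq> {#}"
      by (auto simp: pbw_index_key)
    then show "x \<in> pbw ` {M. set_mset M \<subseteq> Bminus d \<and> M \<noteq> {#}}"
      using index_key_Bminus by (intro image_eqI[of _ _ "image_mset index_key M"]) auto
  qed
  then show ?thesis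
    using w_notin_span_pbw vs.span_mono unfolding word_span_pos_def by blast
qed

lemma v_mixed_vneg:
  assumes "1 \<le> s" "1 \<le> t" "1 \<le> l"
  shows "v (int m) (- int l) (vneg (s,t) x) = vneg (s,t) (v (int m) (- int l) x)
     + sc (of_nat m) ((if s = m then vneg (t,l) x else 0) + (if t = m then vneg (s,l) x else 0))"
proof -
  have "vneg (s,t) = v (- int s) (- int t)" "vneg (t,l) = v (- int t) (- int l)"
    "vneg (s,l) = v (- int s) (- int l)"
    using assms by (simp_all add: vneg_pos)
  then show ?thesis
    using assms by (simp only:, subst v_commutator) (auto simp: vr_eq_v vs.scale_right_distrib)
qed

lemma v_mixed_vneg_disjoint:
  "1 \<le> s \<Longrightarrow> 1 \<le> t \<Longrightarrow> 1 \<le> l \<Longrightarrow> s \<noteq> m \<Longrightarrow> t \<noteq> m \<Longrightarrow>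
    v (int m) (- int l) (vneg (s,t) x) = vneg (s,t) (v (int m) (- int l) x)"
  using v_mixed_vneg[of s t l m x] by simp

lemma v_diag_vneg_disjoint:
  "1 \<le> s \<Longrightarrow> 1 \<le> t \<Longrightarrow> s \<noteq> m \<Longrightarrow> t \<noteq> m \<Longrightarrow>
    v (int m) (int m) (vneg (s,t) x) = vneg (s,t) (v (int m) (int m) x)"
  by (simp add: vneg_pos, subst v_commutator) simp

lemma v_diag_vneg_row:
  assumes "1 \<le> m" "1 \<le> k" "k \<noteq> m"
  shows "v (int m) (int m) (vneg (m,k) x) = vneg (m,k) (v (int m) (int m) x)
     + sc (2 * of_nat m) (v (int m) (- int k) x)"
proof -
  have vr1: "vr (int m) (- int k) x = v (int m) (- int k) x"
    using assms by (simp add: vr_eq_v)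
  have "v (- int k) (int m) = v (int m) (- int k)" by (rule v_swap) (use assms in simp)
  then have vr2: "vr (- int k) (int m) x = v (int m) (- int k) x"
    using assms by (simp add: vr_eq_v)
  have "v (int m) (int m) (vneg (m,k) x) = vneg (m,k) (v (int m) (int m) x)
     + (sc (of_nat m) (vr (int m) (- int k) x) + sc (of_nat m) (vr (- int k) (int m) x))"
    using assms by (simp add: vneg_pos, subst v_commutator) simp
  also have "\<dots> = vneg (m,k) (v (int m) (int m) x) + sc (2 * of_nat m) (v (int m) (- int k) x)"
    unfolding vr1 vr2 by (metis mult_2 vs.scale_left_distrib)
  finally show ?thesis .
qed

lemma v_diag_vneg_diag:
  assumes "1 \<le> m"
  shows "v (int m) (int m) (vneg (m,m) x) = vneg (m,m) (v (int m) (int m) x)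
     + sc (4 * of_nat m) (v (int m) (- int m) x) + sc (2 * of_nat m * of_nat m * (r - 2)) x"
proof -
  have vr1: "vr (int m) (- int m) x = v (int m) (- int m) x + sc ((r - 1) * of_nat m) x"
    unfolding vr_eq cst_def using assms by simp
  have vr2: "vr (- int m) (int m) x = v (int m) (- int m) x + sc (- of_nat m) x"
    unfolding vr_eq cst_def using assms v_symmetric[of "- int m" "int m" x] by simp
  have "v (int m) (int m) (vneg (m,m) x) = vneg (m,m) (v (int m) (int m) x)
     + (sc (of_nat m) (vr (int m) (- int m) x) + sc (of_nat m) (vr (int m) (- int m) x)
      + sc (of_nat m) (vr (- int m) (int m) x) + sc (of_nat m) (vr (- int m) (int m) x))"
    using assms by (simp add: vneg_pos, subst v_commutator) simp
  also have "\<dots> = vneg (m,m) (v (int m) (int m) x)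
     + sc (4 * of_nat m) (v (int m) (- int m) x) + sc (2 * of_nat m * of_nat m * (r - 2)) x"
    unfolding vr1 vr2 by (simp add: algebra_simps vs.scale_left_distrib[symmetric])
  finally show ?thesis .
qed

end

section \<open>The determinant of V_p\<close>

locale det_module = induced_module d r sc \<rho> w
  for d r and sc :: "complex \<Rightarrow> 'v::ab_group_add \<Rightarrow> 'v" and \<rho> w +
  fixes p :: nat
  assumes p_pos: "1 \<le> p"
begin

definition Perm :: "(nat \<Rightarrow> nat) set" where
  "Perm = {\<sigma>. \<sigma> permutes {1..p}}"

definition detop :: "'v \<Rightarrow> 'v" where
  "detop y = (\<Sum>\<sigma>\<in>Perm. sc (of_int (sign \<sigma>)) (vperm \<sigma> {1..p} y))"

lemma finite_Perm [simp]: "finite Perm"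
  unfolding Perm_def by (simp add: finite_permutations)

lemma Perm_permutes: "\<sigma> \<in> Perm \<Longrightarrow> \<sigma> permutes {1..p}"
  unfolding Perm_def by simp

lemma Perm_in: "\<sigma> \<in> Perm \<Longrightarrow> q \<in> {1..p} \<Longrightarrow> \<sigma> q \<in> {1..p}"
  unfolding Perm_def using permutes_in_image[of \<sigma> "{1..p}" q] by blast

lemma Perm_inv: "\<sigma> \<in> Perm \<Longrightarrow> inv \<sigma> \<in> Perm"
  unfolding Perm_def by (simp add: permutes_inv)

lemma Perm_inverses: "\<sigma> \<in> Perm \<Longrightarrow> \<sigma> (inv \<sigma> q) = q" "\<sigma> \<in> Perm \<Longrightarrow> inv \<sigma> (\<sigma> q) = q"
  unfolding Perm_def by (simp_all add: permutes_inverses)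

lemma Perm_eq_inv_iff: "\<sigma> \<in> Perm \<Longrightarrow> \<sigma> q = m \<longleftrightarrow> q = inv \<sigma> m"
  using Perm_inverses[of \<sigma>] by auto

lemma Perm_permutation: "\<sigma> \<in> Perm \<Longrightarrow> permutation \<sigma>"
  unfolding Perm_def using permutation_permutes by blast

lemma Perm_inv_inv: "\<sigma> \<in> Perm \<Longrightarrow> inv (inv \<sigma>) = \<sigma>"
  using Perm_permutes permutes_inv_inv by blast

lemma Perm_compose_transpose:
  "\<sigma> \<in> Perm \<Longrightarrow> a \<in> {1..p} \<Longrightarrow> b \<in> {1..p} \<Longrightarrow> \<sigma> \<circ> Transposition.transpose a b \<in> Perm"
  unfolding Perm_def by (simp add: permutes_compose permutes_swap_id)

lemma sign_compose_transpose:
  "\<sigma> \<in> Perm \<Longrightarrow> a \<noteq> b \<Longrightarrow> sign (\<sigma> \<circ> Transposition.transpose a b) = - sign \<sigma>"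
  by (simp add: sign_compose Perm_permutation permutation_swap_id sign_swap_id)

lemma detV_eq_detop: "detV sc \<rho> p = detop"
proof
  fix y
  have "opw \<rho> (map (\<lambda>q. (1, 1, - int q, - int (\<sigma> q))) [1..<p + 1]) y = vperm \<sigma> {1..p} y"
    if "\<sigma> \<in> Perm" for \<sigma>
  proof -
    have "\<And>q. q \<in> set [1..<p + 1] \<Longrightarrow> 0 < \<sigma> q"
      using Perm_in[OF that] by (metis atLeastAtMost_iff atLeastLessThanSuc_atLeastAtMost
        Suc_eq_plus1 set_upt not_gr0 not_one_le_zero)
    then have "opw \<rho> (map (\<lambda>q. (1, 1, - int q, - int (\<sigma> q))) [1..<p + 1]) y
        = vmon (mset (map (\<lambda>q. (q, \<sigma> q)) [1..<p + 1])) y"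
      by (subst opw_neg_keys) (auto simp: neg_key_def key_index_def comp_def)
    also have "\<dots> = vmon (image_mset (\<lambda>q. (q, \<sigma> q)) (mset [1..<p + 1])) y"
      by (simp only: mset_map)
    also have "mset [1..<p + 1] = mset_set {1..p}"
      by (metis mset_upt atLeastLessThanSuc_atLeastAtMost Suc_eq_plus1)
    finally show ?thesis unfolding vperm_def .
  qed
  then show "detV sc \<rho> p y = detop y"
    unfolding detV_def detop_def Perm_def[symmetric] by simp
qed

lemma detop_add: "detop (x + y) = detop x + detop y"
  unfolding detop_def by (simp add: vperm_add vs.scale_right_distrib sum.distrib)

lemma detop_scale: "detop (sc c x) = sc c (detop x)"
  unfolding detop_def by (simp add: vperm_scale vs.scale_sum_right mult.commute)

lemma detop_zero [simp]: "detop 0 = 0"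
  unfolding detop_def by simp

lemma detop_sum: "detop (sum f X) = (\<Sum>x\<in>X. detop (f x))"
  by (induct X rule: infinite_finite_induct) (simp_all add: detop_add)

lemma detop_vmon: "detop (vmon N x) = vmon N (detop x)"
  unfolding detop_def vperm_def by (simp add: vmon_sum vmon_scale vmon_commute)

definition block_commuting :: "('v \<Rightarrow> 'v) \<Rightarrow> bool" where
  "block_commuting T \<longleftrightarrow> (\<forall>s\<in>{1..p}. \<forall>t\<in>{1..p}. \<forall>x. T (vneg (s,t) x) = vneg (s,t) (T x))"

lemma block_commuting_vperm:
  assumes "block_commuting T" "\<sigma> \<in> Perm" "S \<subseteq> {1..p}"
  shows "T (vperm \<sigma> S x) = vperm \<sigma> S (T x)"
proof (rule commute_vperm)
  show "finite S" using assms(3) finite_subset by blast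
  show "T (vneg (q, \<sigma> q) x) = vneg (q, \<sigma> q) (T x)" if "q \<in> S" for q x
    using assms that Perm_in unfolding block_commuting_def by blast
qed

lemma commute_detop:
  assumes "Vector_Spaces.linear sc sc T" "block_commuting T"
  shows "T (detop x) = detop (T x)"
proof -
  interpret T: Vector_Spaces.linear sc sc T by fact
  show ?thesis
    unfolding detop_def by (simp add: T.sum T.scale block_commuting_vperm[OF assms(2)])
qed

lemma signed_sum_transpose_invariant:
  assumes ab: "a \<in> {1..p}" "b \<in> {1..p}" "a \<noteq> b"
    and G: "\<And>\<sigma>. \<sigma> \<in> Perm \<Longrightarrow> G (\<sigma> \<circ> Transposition.transpose a b) = G \<sigma>"
  shows "(\<Sum>\<sigma>\<in>Perm. sc (of_int (sign \<sigma>)) (G \<sigma>)) = 0"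
proof -
  let ?\<tau> = "Transposition.transpose a b"
  have "(\<Sum>\<sigma>\<in>Perm. sc (of_int (sign \<sigma>)) (G \<sigma>))
      = (\<Sum>\<sigma>\<in>Perm. sc (of_int (sign (\<sigma> \<circ> ?\<tau>))) (G (\<sigma> \<circ> ?\<tau>)))"
    by (rule sum.reindex_bij_witness[where i="\<lambda>\<sigma>. \<sigma> \<circ> ?\<tau>" and j="\<lambda>\<sigma>. \<sigma> \<circ> ?\<tau>"])
       (auto simp: comp_assoc intro: Perm_compose_transpose[OF _ ab(1,2)])
  also have "\<dots> = - (\<Sum>\<sigma>\<in>Perm. sc (of_int (sign \<sigma>)) (G \<sigma>))"
    by (simp add: sign_compose_transpose ab G sum_negf)
  finally show ?thesis by (rule vs_eq_neg_self)
qed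

lemma signed_sum_inv:
  "(\<Sum>\<sigma>\<in>Perm. sc (of_int (sign \<sigma>)) (G (inv \<sigma>))) = (\<Sum>\<sigma>\<in>Perm. sc (of_int (sign \<sigma>)) (G \<sigma>))"
  by (rule sum.reindex_bij_witness[where i=inv and j=inv])
     (auto simp: Perm_inv_inv Perm_inv sign_inverse Perm_permutation)

section \<open>The mixed operators v(m,-l)\<close>

lemma vperm_remove_inv:
  assumes \<sigma>: "\<sigma> \<in> Perm" and m: "m \<in> {1..p}"
  shows "vperm \<sigma> ({1..p} - {inv \<sigma> m}) z = vperm (inv \<sigma>) ({1..p} - {m}) z"
proof -
  let ?X = "{1..p} - {inv \<sigma> m}"
  have "vperm \<sigma> ?X z = vmon (image_mset prod.swap (image_mset (\<lambda>q. (q, \<sigma> q)) (mset_set ?X))) z"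
    unfolding vperm_def by (rule vmon_swap[symmetric])
  also have "image_mset prod.swap (image_mset (\<lambda>q. (q, \<sigma> q)) (mset_set ?X))
      = image_mset (\<lambda>q. (q, inv \<sigma> q)) (image_mset \<sigma> (mset_set ?X))"
    by (simp add: image_mset.compositionality o_def Perm_inverses[OF \<sigma>])
  also have "image_mset \<sigma> (mset_set ?X) = mset_set (\<sigma> ` ?X)"
    by (rule image_mset_mset_set) (rule permutes_inj_on[OF Perm_permutes[OF \<sigma>]])
  also have "\<sigma> ` ?X = {1..p} - {m}"
    using permutes_image[OF Perm_permutes[OF \<sigma>]] Perm_inverses[OF \<sigma>]
      image_set_diff[OF permutes_inj[OF Perm_permutes[OF \<sigma>]]] by simp
  finally show ?thesis unfolding vperm_def .
qed

lemma vperm_diag_factor: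
  assumes \<sigma>: "\<sigma> \<in> Perm" and m: "m \<in> {1..p}"
  shows "vperm \<sigma> {1..p} y = vperm \<sigma> ({1..p} - {m}) (vneg (\<sigma> m, m) y)"
proof -
  have "vperm \<sigma> {1..p} y = vneg (m, \<sigma> m) (vperm \<sigma> ({1..p} - {m}) y)"
    using m by (simp add: vperm_remove)
  then show ?thesis unfolding vperm_def by (simp add: vneg_vmon vneg_swap)
qed

lemma vperm_transpose_invariant:
  assumes \<sigma>: "\<sigma> \<in> Perm" and m: "m \<in> {1..p}" and l: "l \<in> {1..p}" and "l \<noteq> m"
  shows "vperm (\<sigma> \<circ> Transposition.transpose m l) ({1..p} - {m})
           (vneg ((\<sigma> \<circ> Transposition.transpose m l) m, l) y)
       = vperm \<sigma> ({1..p} - {m}) (vneg (\<sigma> m, l) y)"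
    (is "?lhs = ?rhs")
proof -
  let ?Z = "{1..p} - {m} - {l}"
  have lZ: "l \<in> {1..p} - {m}" using l \<open>l \<noteq> m\<close> by simp
  have "?lhs = vneg (l, \<sigma> m) (vperm (\<sigma> \<circ> Transposition.transpose m l) ?Z (vneg (\<sigma> l, l) y))"
    using vperm_remove[OF _ lZ] \<open>l \<noteq> m\<close> by simp
  also have "vperm (\<sigma> \<circ> Transposition.transpose m l) ?Z = vperm \<sigma> ?Z"
    by (rule vperm_cong) auto
  also have "vneg (l, \<sigma> m) (vperm \<sigma> ?Z (vneg (\<sigma> l, l) y))
      = vperm \<sigma> ?Z (vneg (l, \<sigma> l) (vneg (\<sigma> m, l) y))"
    unfolding vperm_def by (simp add: vneg_vmon vneg_swap vneg_commute)
  also have "\<dots> = vneg (l, \<sigma> l) (vperm \<sigma> ?Z (vneg (\<sigma> m, l) y))"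
    unfolding vperm_def by (simp add: vneg_vmon)
  also have "\<dots> = ?rhs"
    using vperm_remove[OF _ lZ, of \<sigma>] by simp
  finally show ?thesis .
qed

lemma signed_sum_vperm_remove:
  assumes m: "m \<in> {1..p}" and l: "l \<in> {1..p}"
  shows "(\<Sum>\<sigma>\<in>Perm. sc (of_int (sign \<sigma>)) (vperm \<sigma> ({1..p} - {m}) (vneg (\<sigma> m, l) y)))
       = (if l = m then detop y else 0)"
proof (cases "l = m")
  case True
  then show ?thesis
    unfolding detop_def using vperm_diag_factor[OF _ m] by (simp cong: sum.cong)
next
  case False
  then show ?thesis
    using signed_sum_transpose_invariant[OF m l] vperm_transpose_invariant[OF _ m l] by simp
qed

lemma v_mixed_vperm:
  assumes \<sigma>: "\<sigma> \<in> Perm" and m: "m \<in> {1..p}" and l: "l \<in> {1..p}"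
  shows "v (int m) (- int l) (vperm \<sigma> {1..p} y)
     = vperm \<sigma> {1..p} (v (int m) (- int l) y)
       + sc (of_nat m) (vperm \<sigma> ({1..p} - {m}) (vneg (\<sigma> m, l) y)
          + vperm \<sigma> ({1..p} - {inv \<sigma> m}) (vneg (inv \<sigma> m, l) y))"
proof -
  define F where "F q x = sc (of_nat m)
      ((if q = m then vneg (\<sigma> q, l) x else 0) + (if \<sigma> q = m then vneg (q, l) x else 0))" for q x
  have "v (int m) (- int l) (vperm \<sigma> {1..p} y)
      = vperm \<sigma> {1..p} (v (int m) (- int l) y) + (\<Sum>q\<in>{1..p}. vperm \<sigma> ({1..p} - {q}) (F q y))"
  proof (rule vperm_leibniz)
    fix q x assume "q \<in> {1..p}"
    then have "1 \<le> q" "1 \<le> \<sigma> q" using Perm_in[OF \<sigma>] by auto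
    then show "v (int m) (- int l) (vneg (q, \<sigma> q) x) = vneg (q, \<sigma> q) (v (int m) (- int l) x) + F q x"
      unfolding F_def using l by (simp add: v_mixed_vneg)
  next
    fix q N x show "F q (vmon N x) = vmon N (F q x)"
      unfolding F_def by (simp add: vmon_scale vmon_add vneg_vmon)
  qed simp
  moreover have "vperm \<sigma> ({1..p} - {q}) (F q y) = sc (of_nat m)
      ((if q = m then vperm \<sigma> ({1..p} - {m}) (vneg (\<sigma> m, l) y) else 0)
      + (if q = inv \<sigma> m then vperm \<sigma> ({1..p} - {inv \<sigma> m}) (vneg (inv \<sigma> m, l) y) else 0))" for q
    unfolding F_def using Perm_eq_inv_iff[OF \<sigma>, of q m] by (simp add: vperm_add vperm_scale)
  ultimately show ?thesis
    using m Perm_in[OF Perm_inv[OF \<sigma>] m]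
    by (simp add: vs.scale_sum_right[symmetric] sum.distrib)
qed

lemma sum_scale_commute: "(\<Sum>x\<in>X. sc (f x) (sc c (G x))) = sc c (\<Sum>x\<in>X. sc (f x) (G x))"
  unfolding vs.scale_sum_right by (rule sum.cong) (simp_all only: scale_commute)

lemma v_mixed_detop:
  assumes m: "m \<in> {1..p}" and l: "l \<in> {1..p}"
  shows "v (int m) (- int l) (detop y) = detop (v (int m) (- int l) y)
     + (if l = m then sc (2 * of_nat m) (detop y) else 0)"
proof -
  let ?E = "v (int m) (- int l)"
  let ?G = "\<lambda>\<sigma>. vperm \<sigma> ({1..p} - {m}) (vneg (\<sigma> m, l) y)"
  have "?E (detop y) = (\<Sum>\<sigma>\<in>Perm. sc (of_int (sign \<sigma>)) (vperm \<sigma> {1..p} (?E y))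
       + (sc (of_int (sign \<sigma>)) (sc (of_nat m) (?G \<sigma>))
       + sc (of_int (sign \<sigma>)) (sc (of_nat m) (?G (inv \<sigma>)))))"
    unfolding detop_def v_sum v_scale
  proof (rule sum.cong[OF refl])
    fix \<sigma> assume \<sigma>: "\<sigma> \<in> Perm"
    show "sc (of_int (sign \<sigma>)) (?E (vperm \<sigma> {1..p} y)) =
      sc (of_int (sign \<sigma>)) (vperm \<sigma> {1..p} (?E y))
       + (sc (of_int (sign \<sigma>)) (sc (of_nat m) (?G \<sigma>))
       + sc (of_int (sign \<sigma>)) (sc (of_nat m) (?G (inv \<sigma>))))"
      unfolding v_mixed_vperm[OF \<sigma> m l] vperm_remove_inv[OF \<sigma> m] Perm_inv_inv[OF \<sigma>]
      by (simp only: vs.scale_right_distrib)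
  qed
  also have "\<dots> = detop (?E y) + (sc (of_nat m) (if l = m then detop y else 0)
      + sc (of_nat m) (if l = m then detop y else 0))"
    unfolding sum.distrib sum_scale_commute signed_sum_inv[of ?G] signed_sum_vperm_remove[OF m l]
    by (simp only: detop_def)
  also have "\<dots> = detop (?E y) + (if l = m then sc (2 * of_nat m) (detop y) else 0)"
    using vs.scale_left_distrib[of "of_nat m" "of_nat m" "detop y", folded mult_2] by simp
  finally show ?thesis .
qed

definition detpow :: "nat \<Rightarrow> 'v" where
  "detpow i = (detop ^^ i) w"

lemma detpow_0: "detpow 0 = w"
  and detpow_Suc: "detpow (Suc i) = detop (detpow i)"
  unfolding detpow_def by simp_all

lemma v_mixed_w:
  "1 \<le> m \<Longrightarrow> 1 \<le> l \<Longrightarrow> v (int m) (- int l) w = (if l = m then sc (of_nat m) w else 0)"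
  using v_zero_mode_w[of "int m"] v_annihilates_w[of "int m" "- int l"] by auto

lemma v_mixed_detpow:
  assumes m: "m \<in> {1..p}" and l: "l \<in> {1..p}"
  shows "v (int m) (- int l) (detpow i) =
    (if l = m then sc (of_nat m * (2 * of_nat i + 1)) (detpow i) else 0)"
proof (induct i)
  case 0 then show ?case using v_mixed_w m l by (simp add: detpow_0)
next
  case (Suc i)
  show ?case
  proof (cases "l = m")
    case True
    have "v (int m) (- int l) (detpow (Suc i))
        = detop (sc (of_nat m * (2 * of_nat i + 1)) (detpow i)) + sc (2 * of_nat m) (detop (detpow i))"
      unfolding detpow_Suc v_mixed_detop[OF m l] Suc using True by simp
    also have "\<dots> = sc (of_nat m * (2 * of_nat (Suc i) + 1)) (detpow (Suc i))"
      unfolding detop_scale detpow_Suc vs.scale_left_distrib[symmetric] by (simp add: algebra_simps)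
    finally show ?thesis using True by simp
  next
    case False
    then show ?thesis unfolding detpow_Suc v_mixed_detop[OF m l] Suc by simp
  qed
qed

section \<open>The raising operators v(m,m)\<close>

lemma vperm_avoiding_commute:
  assumes \<sigma>: "\<sigma> \<in> Perm" and Z: "Z \<subseteq> {1..p}" and avoid: "\<And>q. q \<in> Z \<Longrightarrow> q \<noteq> m \<and> \<sigma> q \<noteq> m"
  shows "v (int m) (int m) (vperm \<sigma> Z x) = vperm \<sigma> Z (v (int m) (int m) x)"
    and "1 \<le> l \<Longrightarrow> v (int m) (- int l) (vperm \<sigma> Z x) = vperm \<sigma> Z (v (int m) (- int l) x)"
proof -
  have pos: "1 \<le> q" "1 \<le> \<sigma> q" if "q \<in> Z" for q
    using that Z Perm_in[OF \<sigma>] by force+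
  have fin: "finite Z" using Z finite_subset by blast
  show "v (int m) (int m) (vperm \<sigma> Z x) = vperm \<sigma> Z (v (int m) (int m) x)"
    using fin by (rule commute_vperm) (use pos avoid v_diag_vneg_disjoint in blast)
  show "1 \<le> l \<Longrightarrow> v (int m) (- int l) (vperm \<sigma> Z x) = vperm \<sigma> Z (v (int m) (- int l) x)"
    using fin by (rule commute_vperm) (use pos avoid v_mixed_vneg_disjoint in blast)
qed

lemma v_diag_vperm_fixed:
  assumes \<sigma>: "\<sigma> \<in> Perm" and m: "m \<in> {1..p}" and fixed: "\<sigma> m = m"
    and ev: "v (int m) (- int m) y = sc e y"
  shows "v (int m) (int m) (vperm \<sigma> {1..p} y) = vperm \<sigma> {1..p} (v (int m) (int m) y)
     + sc (4 * of_nat m * e + 2 * of_nat m * of_nat m * (r - 2)) (vperm \<sigma> ({1..p} - {m}) y)"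
proof -
  let ?Z = "{1..p} - {m}"
  have avoid: "q \<noteq> m \<and> \<sigma> q \<noteq> m" if "q \<in> ?Z" for q
    using that fixed Perm_eq_inv_iff[OF \<sigma>, of q m] Perm_eq_inv_iff[OF \<sigma>, of m m] by auto
  have diag: "v (int m) (int m) (vperm \<sigma> ?Z x) = vperm \<sigma> ?Z (v (int m) (int m) x)" for x
    by (rule vperm_avoiding_commute(1)[OF \<sigma> _ avoid]) auto
  have mixed: "v (int m) (- int m) (vperm \<sigma> ?Z x) = vperm \<sigma> ?Z (v (int m) (- int m) x)" for x
    using m by (intro vperm_avoiding_commute(2)[OF \<sigma> _ avoid]) auto
  have split: "vperm \<sigma> {1..p} x = vneg (m, m) (vperm \<sigma> ?Z x)" for x
    using m fixed by (simp add: vperm_remove)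
  have "v (int m) (int m) (vperm \<sigma> {1..p} y) = vneg (m,m) (v (int m) (int m) (vperm \<sigma> ?Z y))
      + sc (4 * of_nat m) (v (int m) (- int m) (vperm \<sigma> ?Z y))
      + sc (2 * of_nat m * of_nat m * (r - 2)) (vperm \<sigma> ?Z y)"
    unfolding split using m by (intro v_diag_vneg_diag) simp
  also have "\<dots> = vperm \<sigma> {1..p} (v (int m) (int m) y)
      + sc (4 * of_nat m * e + 2 * of_nat m * of_nat m * (r - 2)) (vperm \<sigma> ?Z y)"
    unfolding diag mixed ev split[symmetric] by (simp add: vperm_scale vs.scale_left_distrib add.assoc)
  finally show ?thesis .
qed

lemma v_diag_vperm_moved:
  assumes \<sigma>: "\<sigma> \<in> Perm" and m: "m \<in> {1..p}" and moved: "\<sigma> m \<noteq> m"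
    and ann: "\<And>l. l \<in> {1..p} \<Longrightarrow> l \<noteq> m \<Longrightarrow> v (int m) (- int l) y = 0"
  shows "v (int m) (int m) (vperm \<sigma> {1..p} y) = vperm \<sigma> {1..p} (v (int m) (int m) y)
     + sc (2 * of_nat m * of_nat m)
         (vperm \<sigma> ({1..p} - {m} - {inv \<sigma> m}) (vneg (inv \<sigma> m, \<sigma> m) y))"
proof -
  define k where "k = \<sigma> m"
  define j where "j = inv \<sigma> m"
  have k: "k \<noteq> m" "k \<in> {1..p}" using moved Perm_in[OF \<sigma> m] unfolding k_def by auto
  have j: "j \<noteq> m" "j \<in> {1..p}" "\<sigma> j = m"
    using moved Perm_in[OF Perm_inv[OF \<sigma>] m] Perm_inverses[OF \<sigma>] unfolding j_def by metis+
  let ?Z = "{1..p} - {m} - {j}"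
  let ?z = "vperm \<sigma> ?Z y"
  have avoid: "q \<noteq> m \<and> \<sigma> q \<noteq> m" if "q \<in> ?Z" for q
    using that Perm_eq_inv_iff[OF \<sigma>, of q m] unfolding j_def by auto
  have diag: "v (int m) (int m) (vperm \<sigma> ?Z x) = vperm \<sigma> ?Z (v (int m) (int m) x)" for x
    by (rule vperm_avoiding_commute(1)[OF \<sigma> _ avoid]) auto
  have mixed: "v (int m) (- int l) (vperm \<sigma> ?Z x) = vperm \<sigma> ?Z (v (int m) (- int l) x)"
    if "l \<in> {1..p}" for x l
    using that by (intro vperm_avoiding_commute(2)[OF \<sigma> _ avoid]) auto
  have split: "vperm \<sigma> {1..p} x = vneg (m, k) (vneg (j, m) (vperm \<sigma> ?Z x))" for x
    using vperm_remove[OF _ m, of \<sigma> x] vperm_remove[of "{1..p} - {m}" j \<sigma> x] j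
    unfolding k_def by simp
  have "v (int m) (int m) (vperm \<sigma> {1..p} y) = vneg (m,k) (v (int m) (int m) (vneg (m,j) ?z))
      + sc (2 * of_nat m) (v (int m) (- int k) (vneg (j,m) ?z))"
    unfolding split vneg_swap[of j m] using m k by (intro v_diag_vneg_row) auto
  also have "v (int m) (int m) (vneg (m,j) ?z) = vneg (m,j) (v (int m) (int m) ?z)"
    using v_diag_vneg_row[of m j ?z] m j mixed[OF j(2)] ann[OF j(2,1)] by simp
  also have "v (int m) (- int k) (vneg (j,m) ?z) = sc (of_nat m) (vneg (j,k) ?z)"
    using v_mixed_vneg[of j m k m ?z] m j k mixed[OF k(2)] ann[OF k(2,1)] by simp
  also have "vneg (m,k) (vneg (m,j) (v (int m) (int m) ?z)) = vperm \<sigma> {1..p} (v (int m) (int m) y)"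
    unfolding split diag vneg_swap[of j m] ..
  also have "vneg (j,k) ?z = vperm \<sigma> ?Z (vneg (j,k) y)"
    unfolding vperm_def by (simp add: vneg_vmon)
  finally show ?thesis unfolding j_def k_def by (simp add: mult.assoc)
qed

definition cofactor :: "nat \<Rightarrow> 'v \<Rightarrow> 'v" where
  "cofactor m y = (\<Sum>\<sigma>\<in>Perm \<inter> {\<sigma>. \<sigma> m = m}. sc (of_int (sign \<sigma>)) (vperm \<sigma> ({1..p} - {m}) y))"

lemma detop_cofactor: "detop (cofactor m y) = cofactor m (detop y)"
  unfolding cofactor_def detop_sum detop_scale vperm_def detop_vmon ..

lemma compose_transpose_fixed:
  assumes \<tau>: "\<tau> \<in> Perm" "\<tau> m = m" and j: "j \<in> {1..p}" "j \<noteq> m" and m: "m \<in> {1..p}"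
  shows "\<tau> \<circ> Transposition.transpose m j \<in> Perm"
    and "(\<tau> \<circ> Transposition.transpose m j) m = \<tau> j"
    and "\<tau> j \<noteq> m"
    and "inv (\<tau> \<circ> Transposition.transpose m j) m = j"
proof -
  show \<sigma>: "\<tau> \<circ> Transposition.transpose m j \<in> Perm" by (rule Perm_compose_transpose[OF \<tau>(1) m j(1)])
  show "(\<tau> \<circ> Transposition.transpose m j) m = \<tau> j" by simp
  show "\<tau> j \<noteq> m" using j(2) \<tau> Perm_eq_inv_iff[OF \<tau>(1)] by metis
  have "(\<tau> \<circ> Transposition.transpose m j) j = m" using \<tau>(2) by simp
  then show "inv (\<tau> \<circ> Transposition.transpose m j) m = j" using Perm_eq_inv_iff[OF \<sigma>, of j m] by simp
qed

lemma signed_vperm_compose_transpose_fixed: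
  assumes \<tau>: "\<tau> \<in> Perm" "\<tau> m = m" and j: "j \<in> {1..p}" "j \<noteq> m" and m: "m \<in> {1..p}"
  defines "\<sigma> \<equiv> \<tau> \<circ> Transposition.transpose m j"
  shows "sc (of_int (sign \<sigma>)) (vperm \<sigma> ({1..p} - {m} - {inv \<sigma> m}) (vneg (inv \<sigma> m, \<tau> j) y))
       = - sc (of_int (sign \<tau>)) (vperm \<tau> ({1..p} - {m}) y)"
proof -
  have "vperm \<tau> ({1..p} - {m}) y = vneg (j, \<tau> j) (vperm \<tau> ({1..p} - {m} - {j}) y)"
    using j by (intro vperm_remove) auto
  also have "vperm \<tau> ({1..p} - {m} - {j}) = vperm \<sigma> ({1..p} - {m} - {j})"
    unfolding \<sigma>_def by (rule vperm_cong) auto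
  finally have "vperm \<sigma> ({1..p} - {m} - {j}) (vneg (j, \<tau> j) y) = vperm \<tau> ({1..p} - {m}) y"
    unfolding vperm_def by (simp add: vneg_vmon)
  moreover have "sign \<sigma> = - sign \<tau>"
    unfolding \<sigma>_def using sign_compose_transpose[OF \<tau>(1)] j(2) by simp
  ultimately show ?thesis
    unfolding \<sigma>_def using compose_transpose_fixed(4)[OF \<tau> j m] by simp
qed

lemma bij_betw_compose_transpose:
  assumes m: "m \<in> {1..p}"
  shows "bij_betw (\<lambda>(\<tau>, j). \<tau> \<circ> Transposition.transpose m j)
    ((Perm \<inter> {\<sigma>. \<sigma> m = m}) \<times> ({1..p} - {m})) (Perm \<inter> - {\<sigma>. \<sigma> m = m})"
proof -
  let ?f = "\<lambda>(\<tau>, j). \<tau> \<circ> Transposition.transpose m j"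
  let ?g = "\<lambda>\<sigma>. (\<sigma> \<circ> Transposition.transpose m (inv \<sigma> m), inv \<sigma> m)"
  let ?A = "(Perm \<inter> {\<sigma>. \<sigma> m = m}) \<times> ({1..p} - {m})" and ?B = "Perm \<inter> - {\<sigma>. \<sigma> m = m}"
  have A: "?g (?f z) = z \<and> ?f z \<in> ?B" if "z \<in> ?A" for z
  proof -
    obtain \<tau> j where z: "z = (\<tau>, j)" and \<tau>: "\<tau> \<in> Perm" "\<tau> m = m" and j: "j \<in> {1..p}" "j \<noteq> m"
      using \<open>z \<in> ?A\<close> by blast
    show ?thesis
      unfolding z using compose_transpose_fixed[OF \<tau> j m] by (simp add: comp_assoc)
  qed
  have B: "?f (?g \<sigma>) = \<sigma> \<and> ?g \<sigma> \<in> ?A" if "\<sigma> \<in> ?B" for \<sigma>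
  proof -
    have \<sigma>: "\<sigma> \<in> Perm" and moved: "\<sigma> m \<noteq> m" using that by auto
    have j: "inv \<sigma> m \<in> {1..p}" "inv \<sigma> m \<noteq> m"
      using Perm_in[OF Perm_inv[OF \<sigma>] m] moved Perm_inverses[OF \<sigma>] by metis+
    show ?thesis
      using Perm_compose_transpose[OF \<sigma> m j(1)] j Perm_inverses[OF \<sigma>] by (simp add: comp_assoc)
  qed
  show ?thesis
    by (rule bij_betw_byWitness[where f'="?g"]) (use A B in blast)+
qed

lemma signed_sum_moved:
  assumes m: "m \<in> {1..p}"
  shows "(\<Sum>\<sigma>\<in>Perm \<inter> - {\<sigma>. \<sigma> m = m}. sc (of_int (sign \<sigma>))
            (vperm \<sigma> ({1..p} - {m} - {inv \<sigma> m}) (vneg (inv \<sigma> m, \<sigma> m) y)))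
       = - sc (of_nat p - 1) (cofactor m y)"
proof -
  let ?J = "{1..p} - {m}"
  have "(\<Sum>\<sigma>\<in>Perm \<inter> - {\<sigma>. \<sigma> m = m}. sc (of_int (sign \<sigma>))
            (vperm \<sigma> ({1..p} - {m} - {inv \<sigma> m}) (vneg (inv \<sigma> m, \<sigma> m) y)))
      = (\<Sum>(\<tau>, j)\<in>(Perm \<inter> {\<sigma>. \<sigma> m = m}) \<times> ?J. - sc (of_int (sign \<tau>)) (vperm \<tau> ?J y))"
    unfolding sum.reindex_bij_betw[OF bij_betw_compose_transpose[OF m], symmetric]
  proof (rule sum.cong[OF refl])
    fix z assume "z \<in> (Perm \<inter> {\<sigma>. \<sigma> m = m}) \<times> ?J"
    then show "(\<lambda>\<sigma>. sc (of_int (sign \<sigma>)) (vperm \<sigma> ({1..p} - {m} - {inv \<sigma> m}) (vneg (inv \<sigma> m, \<sigma> m) y)))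
        ((\<lambda>(\<tau>, j). \<tau> \<circ> Transposition.transpose m j) z)
      = (\<lambda>(\<tau>, j). - sc (of_int (sign \<tau>)) (vperm \<tau> ?J y)) z"
      using signed_vperm_compose_transpose_fixed[OF _ _ _ _ m] by (cases z) simp
  qed
  also have "\<dots> = (\<Sum>\<tau>\<in>Perm \<inter> {\<sigma>. \<sigma> m = m}. \<Sum>j\<in>?J. - sc (of_int (sign \<tau>)) (vperm \<tau> ?J y))"
    unfolding sum.cartesian_product ..
  also have "\<dots> = - sc (of_nat p - 1) (cofactor m y)"
    using m p_pos by (simp add: vs.sum_constant_scale cofactor_def vs.scale_sum_right sum_negf of_nat_diff)
  finally show ?thesis .
qed

lemma v_diag_detop:
  assumes m: "m \<in> {1..p}"
    and ann: "\<And>l. l \<in> {1..p} \<Longrightarrow> l \<noteq> m \<Longrightarrow> v (int m) (- int l) y = 0"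
    and ev: "v (int m) (- int m) y = sc e y"
  shows "v (int m) (int m) (detop y) = detop (v (int m) (int m) y)
     + sc (2 * of_nat m * of_nat m * (r + 1 - of_nat p) + 4 * of_nat m * e - 4 * of_nat m * of_nat m)
         (cofactor m y)"
proof -
  let ?X = "v (int m) (int m)"
  let ?c1 = "4 * of_nat m * e + 2 * of_nat m * of_nat m * (r - 2)"
  let ?c2 = "2 * of_nat m * of_nat m :: complex"
  let ?G1 = "\<lambda>\<sigma>. vperm \<sigma> ({1..p} - {m}) y"
  let ?G2 = "\<lambda>\<sigma>. vperm \<sigma> ({1..p} - {m} - {inv \<sigma> m}) (vneg (inv \<sigma> m, \<sigma> m) y)"
  have "?X (detop y) = (\<Sum>\<sigma>\<in>Perm. sc (of_int (sign \<sigma>)) (vperm \<sigma> {1..p} (?X y))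
      + (if \<sigma> m = m then sc ?c1 (sc (of_int (sign \<sigma>)) (?G1 \<sigma>))
         else sc ?c2 (sc (of_int (sign \<sigma>)) (?G2 \<sigma>))))"
    unfolding detop_def v_sum v_scale
  proof (rule sum.cong[OF refl])
    fix \<sigma> assume \<sigma>: "\<sigma> \<in> Perm"
    show "sc (of_int (sign \<sigma>)) (?X (vperm \<sigma> {1..p} y)) =
      sc (of_int (sign \<sigma>)) (vperm \<sigma> {1..p} (?X y))
      + (if \<sigma> m = m then sc ?c1 (sc (of_int (sign \<sigma>)) (?G1 \<sigma>))
         else sc ?c2 (sc (of_int (sign \<sigma>)) (?G2 \<sigma>)))"
      using v_diag_vperm_fixed[OF \<sigma> m _ ev] v_diag_vperm_moved[OF \<sigma> m _ ann]
      by (cases "\<sigma> m = m")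
         (simp_all del: vs.scale_scale add: vs.scale_right_distrib scale_commute[of "of_int (sign \<sigma>)"])
  qed
  also have "\<dots> = detop (?X y) + (sc ?c1 (cofactor m y) + sc ?c2 (- sc (of_nat p - 1) (cofactor m y)))"
    unfolding sum.distrib sum.If_cases[OF finite_Perm] signed_sum_moved[OF m, symmetric]
    unfolding cofactor_def detop_def vs.scale_sum_right ..
  also have "\<dots> = detop (?X y) + sc (?c1 - ?c2 * (of_nat p - 1)) (cofactor m y)"
  proof -
    have "sc ?c2 (- sc (of_nat p - 1) (cofactor m y)) = - sc (?c2 * (of_nat p - 1)) (cofactor m y)"
      by simp
    then show ?thesis by (simp add: vs.scale_left_diff_distrib)
  qed
  also have "?c1 - ?c2 * (of_nat p - 1)
      = 2 * of_nat m * of_nat m * (r + 1 - of_nat p) + 4 * of_nat m * e - 4 * of_nat m * of_nat m"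
    by (simp add: algebra_simps)
  finally show ?thesis .
qed

lemma v_diag_w: "1 \<le> m \<Longrightarrow> v (int m) (int m) w = 0"
  by (rule v_annihilates_w) simp_all

lemma v_diag_detpow:
  assumes m: "m \<in> {1..p}"
  shows "v (int m) (int m) (detpow (Suc i)) =
    sc (2 * of_nat m * of_nat m * of_nat (Suc i) * (r + 2 * of_nat (Suc i) - of_nat p - 1))
      (cofactor m (detpow i))"
proof -
  define c :: "nat \<Rightarrow> complex" where
    "c i = 2 * of_nat m * of_nat m * of_nat i * (r + 2 * of_nat i - of_nat p - 1)" for i
  have step: "v (int m) (int m) (detpow (Suc i))
      = detop (v (int m) (int m) (detpow i)) + sc (c (Suc i) - c i) (cofactor m (detpow i))" for i
  proof -
    have "v (int m) (int m) (detpow (Suc i)) = detop (v (int m) (int m) (detpow i))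
        + sc (2 * of_nat m * of_nat m * (r + 1 - of_nat p) + 4 * of_nat m * (of_nat m * (2 * of_nat i + 1))
          - 4 * of_nat m * of_nat m) (cofactor m (detpow i))"
      unfolding detpow_Suc using v_mixed_detpow[OF m] m by (intro v_diag_detop) auto
    then show ?thesis by (simp add: c_def algebra_simps)
  qed
  have detop_v: "detop (v (int m) (int m) (detpow i)) = sc (c i) (cofactor m (detpow i))" for i
  proof (induct i)
    case 0 then show ?case using m by (simp add: detpow_0 v_diag_w c_def)
  next
    case (Suc i)
    then show ?case
      unfolding step detop_add Suc detop_scale detop_cofactor detpow_Suc[symmetric]
      by (simp add: vs.scale_left_distrib[symmetric])
  qed
  show ?thesis
    unfolding step detop_v vs.scale_left_distrib[symmetric] by (simp add: c_def)
qed

lemma v_mixed_diag: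
  assumes "1 \<le> a" "1 \<le> b" "a \<noteq> b"
  shows "v (int a) (- int b) (v (int b) (int b) x) = v (int b) (int b) (v (int a) (- int b) x)
     + sc (- 2 * of_nat b) (v (int a) (int b) x)"
proof -
  have "v (int a) (- int b) (v (int b) (int b) x) = v (int b) (int b) (v (int a) (- int b) x)
     + (sc (- of_nat b) (vr (int a) (int b) x) + sc (- of_nat b) (vr (int a) (int b) x))"
    using assms by (subst v_commutator) simp
  also have "vr (int a) (int b) x = v (int a) (int b) x"
    using assms by (simp add: vr_eq_v)
  also have "sc (- of_nat b) (v (int a) (int b) x) + sc (- of_nat b) (v (int a) (int b) x)
      = sc (- 2 * of_nat b) (v (int a) (int b) x)"
    unfolding vs.scale_left_distrib[symmetric] by simp
  finally show ?thesis .
qed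

section \<open>Operators commuting with the entries of V_p\<close>

lemma eigen_detpow:
  assumes "Vector_Spaces.linear sc sc T" "block_commuting T" "T w = sc c w"
  shows "T (detpow i) = sc c (detpow i)"
  by (induct i) (simp_all add: detpow_0 detpow_Suc commute_detop[OF assms(1,2)] detop_scale assms(3))

lemma block_commuting_nonpos: "m \<le> 0 \<Longrightarrow> n \<le> 0 \<Longrightarrow> block_commuting (v m n)"
  unfolding block_commuting_def by (auto simp: vneg_pos, subst v_commutator, simp)

lemma block_commuting_beyond: "p < m \<Longrightarrow> 1 \<le> l \<Longrightarrow> block_commuting (v (int m) (- int l))"
  unfolding block_commuting_def using v_mixed_vneg_disjoint by auto

lemma v_zero_mode_detpow: "\<exists>c. v m (- m) (detpow i) = sc c (detpow i)"
proof -
  have pos: "\<exists>c. v (int a) (- int a) (detpow i) = sc c (detpow i)" if "1 \<le> a" for a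
  proof (cases "a \<le> p")
    case True then show ?thesis using v_mixed_detpow[of a a i] that by auto
  next
    case False
    have "v (int a) (- int a) (detpow i) = sc (of_nat a) (detpow i)"
      using v_zero_mode_w[of "int a"] False that
      by (intro eigen_detpow linear_v block_commuting_beyond) simp_all
    then show ?thesis by blast
  qed
  consider "0 < m" | "m = 0" | "m < 0" by linarith
  then show ?thesis
  proof cases
    case 1 then show ?thesis using pos[of "nat m"] by simp
  next
    case 2
    have "v 0 0 (detpow i) = sc 0 (detpow i)"
      using v_zero_mode_w[of 0] by (intro eigen_detpow linear_v block_commuting_nonpos) simp_all
    then show ?thesis using 2 by auto
  next
    case 3
    have "\<exists>c. v (- m) m (detpow i) = sc c (detpow i)" using pos[of "nat (- m)"] 3 by simp
    then obtain c where "v (- m) m (detpow i) = sc c (detpow i)" ..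
    then have "v m (- m) (detpow i) = sc (c + of_int m) (detpow i)"
      using v_symmetric[of m "- m" "detpow i"] by (simp add: vs.scale_left_distrib)
    then show ?thesis by blast
  qed
qed

definition inert :: "int \<Rightarrow> int \<Rightarrow> bool" where
  "inert a b \<longleftrightarrow> block_commuting (v a b) \<and> v a b w = 0"

definition nearly_inert :: "int \<Rightarrow> int \<Rightarrow> bool" where
  "nearly_inert m n \<longleftrightarrow> (\<forall>s\<in>{1..p}. \<forall>t\<in>{1..p}. \<exists>a b a' b' c c'. inert a b \<and> inert a' b' \<and>
     (\<forall>x. v m n (vneg (s,t) x) = vneg (s,t) (v m n x) + sc c (v a b x) + sc c' (v a' b' x)))"

lemma inert_detpow: "inert a b \<Longrightarrow> v a b (detpow i) = 0"
  unfolding inert_def using eigen_detpow[OF linear_v, of a b 0] by simp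

lemma nearly_inert_vperm:
  assumes "nearly_inert m n" "\<sigma> \<in> Perm" "S \<subseteq> {1..p}"
    and "v m n y = 0" "\<And>a b. inert a b \<Longrightarrow> v a b y = 0"
  shows "v m n (vperm \<sigma> S y) = 0"
proof -
  have "finite S" using assms(3) finite_subset by blast
  then show ?thesis using assms(3)
  proof (induct S rule: finite_induct)
    case empty then show ?case using assms(4) by (simp add: vperm_def)
  next
    case (insert q S)
    then have "q \<in> {1..p}" "\<sigma> q \<in> {1..p}" using Perm_in[OF assms(2)] by auto
    then obtain a b a' b' c c' where "inert a b" "inert a' b'"
      and comm: "\<And>x. v m n (vneg (q, \<sigma> q) x) = vneg (q, \<sigma> q) (v m n x) + sc c (v a b x) + sc c' (v a' b' x)"
      using assms(1) unfolding nearly_inert_def by blast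
    then show ?case
      using insert assms(2,5) by (simp add: vperm_insert comm block_commuting_vperm inert_def)
  qed
qed

lemma nearly_inert_detpow:
  assumes "nearly_inert m n" "v m n w = 0"
  shows "v m n (detpow i) = 0"
proof (induct i)
  case 0 then show ?case using assms(2) by (simp add: detpow_0)
next
  case (Suc i)
  then show ?case
    unfolding detpow_Suc detop_def v_sum v_scale
    using nearly_inert_vperm[OF assms(1) _ order_refl] inert_detpow by simp
qed

lemma inert_neg_zero: "1 \<le> t \<Longrightarrow> inert (- int t) 0"
  unfolding inert_def by (simp add: block_commuting_nonpos v_annihilates_w)

lemma inert_beyond: "p < m \<Longrightarrow> t \<in> {1..p} \<Longrightarrow> inert (int m) (- int t)"
  unfolding inert_def using block_commuting_beyond v_annihilates_w by simp

lemma nearly_inert_beyond: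
  assumes "p < a"
  shows "nearly_inert (int a) n"
  unfolding nearly_inert_def
proof (intro ballI)
  fix s t assume s: "s \<in> {1..p}" and t: "t \<in> {1..p}"
  have "v (int a) n (vneg (s,t) x) = vneg (s,t) (v (int a) n x)
      + sc (dlt (n = int s) n) (v (int a) (- int t) x) + sc (dlt (n = int t) n) (v (int a) (- int s) x)" for x
    using s t assms
    by (simp add: vneg_pos, subst v_commutator) (simp add: vr_eq_v add.assoc eq_neg_iff_add_eq_0)
  then show "\<exists>a1 b1 a2 b2 c1 c2. inert a1 b1 \<and> inert a2 b2 \<and> (\<forall>x. v (int a) n (vneg (s,t) x)
      = vneg (s,t) (v (int a) n x) + sc c1 (v a1 b1 x) + sc c2 (v a2 b2 x))"
    using inert_beyond[OF assms t] inert_beyond[OF assms s] by blast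
qed

lemma nearly_inert_zero:
  assumes "1 \<le> a"
  shows "nearly_inert (int a) 0"
  unfolding nearly_inert_def
proof (intro ballI)
  fix s t assume s: "s \<in> {1..p}" and t: "t \<in> {1..p}"
  have "v (int a) 0 (vneg (s,t) x) = vneg (s,t) (v (int a) 0 x)
      + sc (dlt (a = s) (int a)) (v (- int t) 0 x) + sc (dlt (a = t) (int a)) (v (- int s) 0 x)" for x
    using s t by (simp add: vneg_pos, subst v_commutator) (simp add: vr_eq_v add.assoc)
  then show "\<exists>a1 b1 a2 b2 c1 c2. inert a1 b1 \<and> inert a2 b2 \<and> (\<forall>x. v (int a) 0 (vneg (s,t) x)
      = vneg (s,t) (v (int a) 0 x) + sc c1 (v a1 b1 x) + sc c2 (v a2 b2 x))"
    using inert_neg_zero[of t] inert_neg_zero[of s] s t by (metis atLeastAtMost_iff)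
qed

section \<open>Nonvanishing of the powers of the determinant\<close>

definition perm_mset :: "(nat \<Rightarrow> nat) \<Rightarrow> (nat \<times> nat) multiset" where
  "perm_mset \<sigma> = image_mset (\<lambda>q. (q, \<sigma> q)) (mset_set {1..p})"

definition perm_tuples :: "nat \<Rightarrow> (nat \<Rightarrow> nat) list set" where
  "perm_tuples i = {ls. length ls = i \<and> set ls \<subseteq> Perm}"

lemma finite_perm_tuples: "finite (perm_tuples i)"
  unfolding perm_tuples_def using finite_lists_length_eq[OF finite_Perm, of i] by (simp add: conj_commute)

lemma perm_tuples_Suc: "perm_tuples (Suc i) = (\<lambda>(\<sigma>, ls). \<sigma> # ls) ` (Perm \<times> perm_tuples i)"
  unfolding perm_tuples_def by (force simp: length_Suc_conv)

lemma detpow_expand: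
  "detpow i = (\<Sum>ls\<in>perm_tuples i.
     sc (of_int (prod_list (map sign ls))) (vmon (sum_list (map perm_mset ls)) w))"
proof (induct i)
  case 0
  have "perm_tuples 0 = {[]}" unfolding perm_tuples_def by auto
  then show ?case by (simp add: detpow_0)
next
  case (Suc i)
  have inj: "inj_on (\<lambda>(\<sigma>, ls). \<sigma> # ls) (Perm \<times> perm_tuples i)" by (rule inj_onI) auto
  have "detpow (Suc i) = (\<Sum>\<sigma>\<in>Perm. \<Sum>ls\<in>perm_tuples i. sc (of_int (sign \<sigma>))
      (sc (of_int (prod_list (map sign ls))) (vmon (perm_mset \<sigma>) (vmon (sum_list (map perm_mset ls)) w))))"
    unfolding detpow_Suc detop_def Suc vperm_def perm_mset_def
    by (simp add: vmon_sum vmon_scale vs.scale_sum_right)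
  also have "\<dots> = (\<Sum>ls\<in>perm_tuples (Suc i).
      sc (of_int (prod_list (map sign ls))) (vmon (sum_list (map perm_mset ls)) w))"
    unfolding perm_tuples_Suc sum.reindex[OF inj] sum.cartesian_product
    by (rule sum.cong[OF refl]) (auto simp: vmon_union)
  finally show ?case .
qed

lemma perm_tuple_mset_block:
  assumes ls: "ls \<in> perm_tuples i" and a: "a \<in># sum_list (map perm_mset ls)"
  shows "fst a \<in> {1..p} \<and> snd a \<in> {1..p}"
proof -
  obtain \<sigma> where \<sigma>: "\<sigma> \<in> set ls" and "a \<in># perm_mset \<sigma>" using a by auto
  then obtain q where "q \<in> {1..p}" "a = (q, \<sigma> q)" unfolding perm_mset_def by auto
  moreover have "\<sigma> \<in> Perm" using \<sigma> ls unfolding perm_tuples_def by blast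
  ultimately show ?thesis using Perm_in by simp
qed

lemma perm_tuple_diagonal:
  assumes ls: "ls \<in> perm_tuples i"
    and diag: "\<And>a. a \<in># sum_list (map perm_mset ls) \<Longrightarrow> fst a = snd a"
  shows "ls = replicate i id"
proof -
  have "\<sigma> = id" if \<sigma>: "\<sigma> \<in> set ls" for \<sigma>
  proof
    fix q
    have perm: "\<sigma> permutes {1..p}" using \<sigma> ls unfolding perm_tuples_def Perm_def by auto
    show "\<sigma> q = id q"
    proof (cases "q \<in> {1..p}")
      case True
      then have "(q, \<sigma> q) \<in># perm_mset \<sigma>" unfolding perm_mset_def by simp
      then have "(q, \<sigma> q) \<in># sum_list (map perm_mset ls)" using \<sigma> by auto
      then show ?thesis using diag by fastforce
    next
      case False then show ?thesis using perm unfolding permutes_def by simp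
    qed
  qed
  then have "replicate (length ls) id = ls" by (intro replicate_length_same) blast
  then show ?thesis using ls unfolding perm_tuples_def by simp
qed

lemma index_key_eq_diag: "1 \<le> s \<Longrightarrow> 1 \<le> t \<Longrightarrow> index_key (s, t) = index_key (q, q) \<Longrightarrow> s = t"
  unfolding index_key_def by (simp add: max_def min_def split: if_splits)

lemma detpow_nonzero: "detpow i \<noteq> 0"
proof
  assume zero: "detpow i = 0"
  let ?T = "perm_tuples i" and ?id = "replicate i id"
  let ?M = "\<lambda>ls. image_mset index_key (sum_list (map perm_mset ls))"
  let ?c = "\<lambda>M. \<Sum>ls\<in>{ls \<in> ?T. ?M ls = M}. of_int (prod_list (map sign ls)) :: complex"
  have "detpow i = (\<Sum>ls\<in>?T. sc (of_int (prod_list (map sign ls))) (pbw (?M ls)))"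
    unfolding detpow_expand pbw_index_key ..
  also have "\<dots> = (\<Sum>M\<in>?M ` ?T. \<Sum>ls\<in>{ls \<in> ?T. ?M ls = M}.
      sc (of_int (prod_list (map sign ls))) (pbw (?M ls)))"
    by (rule sum.image_gen[OF finite_perm_tuples])
  also have "\<dots> = (\<Sum>M\<in>?M ` ?T. sc (?c M) (pbw M))"
    unfolding vs.scale_sum_left by (rule sum.cong[OF refl]) (rule sum.cong, auto)
  finally have sum0: "(\<Sum>M\<in>?M ` ?T. sc (?c M) (pbw M)) = 0" using zero by simp
  have id: "?id \<in> ?T" unfolding perm_tuples_def Perm_def by (auto simp: permutes_id)
  have "?c (?M ?id) = 0"
  proof (rule pbw_independent[OF _ _ sum0])
    show "finite (?M ` ?T)" using finite_perm_tuples by simp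
    show "?M ?id \<in> ?M ` ?T" using id by (rule imageI)
    show "set_mset M \<subseteq> Bminus d" if "M \<in> ?M ` ?T" for M using that index_key_Bminus by auto
  qed
  moreover have "{ls \<in> ?T. ?M ls = ?M ?id} = {?id}"
  proof (intro equalityI subsetI)
    fix ls assume "ls \<in> {ls \<in> ?T. ?M ls = ?M ?id}"
    then have ls: "ls \<in> ?T" and eq: "?M ls = ?M ?id" by auto
    have "fst a = snd a" if a: "a \<in># sum_list (map perm_mset ls)" for a
    proof -
      have "index_key a \<in># ?M ?id" unfolding eq[symmetric] using a by simp
      then obtain q where "index_key a = index_key (q, q)"
        unfolding perm_mset_def by (auto split: if_splits)
      then show ?thesis
        using perm_tuple_mset_block[OF ls a] index_key_eq_diag[of "fst a" "snd a" q] by auto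
    qed
    then show "ls \<in> {?id}" using perm_tuple_diagonal[OF ls] by simp
  qed (use id in simp)
  ultimately show False by simp
qed

section \<open>The singular vector and a proper submodule\<close>

lemma detop_word_span_pos:
  assumes "x \<in> word_span"
  shows "detop x \<in> word_span_pos"
proof -
  have sub: "vs.subspace word_span_pos" unfolding word_span_pos_def by simp
  have "vperm \<sigma> {1..p} x \<in> word_span_pos" for \<sigma>
  proof -
    have "vperm \<sigma> {1..p} x = vneg (1, \<sigma> 1) (vperm \<sigma> ({1..p} - {1}) x)"
      using p_pos by (intro vperm_remove) auto
    then show ?thesis using assms by (simp add: vperm_def vmon_word_span vneg_word_span_pos)
  qed
  then show ?thesis unfolding detop_def by (intro vs.subspace_sum[OF sub] vs.subspace_scale[OF sub])
qed

lemma detpow_word_span: "detpow i \<in> word_span"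
  by (induct i) (use w_in_word_span detop_word_span_pos word_span_pos_subset in
      \<open>auto simp: detpow_0 detpow_Suc\<close>)

context
  fixes \<nu> :: nat
  assumes \<nu>_pos: "1 \<le> \<nu>" and r_eq: "r = 1 - 2 * of_nat \<nu> + of_nat p"
begin

lemma v_diag_singular: "a \<in> {1..p} \<Longrightarrow> v (int a) (int a) (detpow \<nu>) = 0"
  using v_diag_detpow[of a "\<nu> - 1"] \<nu>_pos r_eq by (simp add: of_nat_diff)

lemma v_offdiag_singular:
  assumes "a \<in> {1..p}" "b \<in> {1..p}" "a \<noteq> b"
  shows "v (int a) (int b) (detpow \<nu>) = 0"
proof -
  have "sc (- 2 * of_nat b) (v (int a) (int b) (detpow \<nu>)) = 0"
    using v_mixed_diag[of a b "detpow \<nu>"] v_diag_singular[OF assms(2)] v_mixed_detpow[OF assms(1,2)] assms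
    by simp
  then show ?thesis using assms(2) by simp
qed

lemma v_singular_ordered:
  assumes "n \<le> m" "0 < m + n"
  shows "v m n (detpow \<nu>) = 0"
proof -
  define a where "a = nat m"
  have a: "m = int a" "1 \<le> a" using assms unfolding a_def by linarith+
  consider "p < a" | "n = 0" | "a \<le> p" "0 < n" | "a \<le> p" "n < 0" by linarith
  then show ?thesis
  proof cases
    case 1
    then show ?thesis
      using nearly_inert_detpow[OF nearly_inert_beyond] v_annihilates_w assms a by simp
  next
    case 2
    then show ?thesis
      using nearly_inert_detpow[OF nearly_inert_zero] v_annihilates_w a by simp
  next
    case 3
    define b where "b = nat n"
    have "n = int b" "b \<in> {1..p}" "a \<in> {1..p}" using 3 assms a unfolding b_def by auto
    then show ?thesis
      using a v_diag_singular v_offdiag_singular by (cases "a = b") auto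
  next
    case 4
    define k where "k = nat (- n)"
    have "n = - int k" "k \<in> {1..p}" "a \<in> {1..p}" "k \<noteq> a" using 4 assms a unfolding k_def by auto
    then show ?thesis using v_mixed_detpow a by simp
  qed
qed

lemma detpow_singular: "0 < m + n \<Longrightarrow> v m n (detpow \<nu>) = 0"
  using v_singular_ordered[of n m] v_singular_ordered[of m n] v_swap[of m n] by (cases "n \<le> m") auto

definition neg_word :: "key list \<Rightarrow> bool" where
  "neg_word ks \<longleftrightarrow> (\<forall>k\<in>set ks. \<exists>a b. k = (1,1,a,b) \<and> a + b < 0)"

definition sing_submodule :: "'v set" where
  "sing_submodule = vs.span {opw \<rho> ks (detpow \<nu>) | ks. neg_word ks}"

lemma opw_sing_submodule: "neg_word ks \<Longrightarrow> opw \<rho> ks (detpow \<nu>) \<in> sing_submodule"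
  unfolding sing_submodule_def by (rule vs.span_base) blast

lemma detpow_sing_submodule: "detpow \<nu> \<in> sing_submodule"
  using opw_sing_submodule[of "[]"] by (simp add: neg_word_def)

lemma v_neg_sing_submodule:
  assumes "a + b < 0" "x \<in> sing_submodule"
  shows "v a b x \<in> sing_submodule"
  using assms(2) unfolding sing_submodule_def
proof (rule v_span[rotated])
  fix g assume "g \<in> {opw \<rho> ks (detpow \<nu>) | ks. neg_word ks}"
  then obtain ks where "g = opw \<rho> ks (detpow \<nu>)" "neg_word ks" by blast
  then show "v a b g \<in> vs.span {opw \<rho> ks (detpow \<nu>) | ks. neg_word ks}"
    using opw_sing_submodule[of "(1,1,a,b) # ks"] assms(1)
    unfolding sing_submodule_def neg_word_def by simp
qed

lemma v_opw_sing_submodule: "neg_word ks \<Longrightarrow> v m n (opw \<rho> ks (detpow \<nu>)) \<in> sing_submodule"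
proof (induct ks arbitrary: m n)
  case Nil
  consider "m + n < 0" | "0 < m + n" | "n = - m" by linarith
  then show ?case
  proof cases
    case 1 then show ?thesis using v_neg_sing_submodule detpow_sing_submodule by simp
  next
    case 2 then show ?thesis using detpow_singular by (simp add: sing_submodule_def vs.span_zero)
  next
    case 3
    obtain c where "v m (- m) (detpow \<nu>) = sc c (detpow \<nu>)" using v_zero_mode_detpow by blast
    then show ?thesis using 3 detpow_sing_submodule by (simp add: sing_submodule_def vs.span_scale)
  qed
next
  case (Cons k ks)
  obtain a b where k: "k = (1,1,a,b)" "a + b < 0" using Cons(2) unfolding neg_word_def by auto
  let ?z = "opw \<rho> ks (detpow \<nu>)"
  have ks: "neg_word ks" using Cons(2) unfolding neg_word_def by simp
  have v_z: "v m n ?z \<in> sing_submodule" for m n using Cons(1)[OF ks] .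
  have vr_z: "vr m n ?z \<in> sing_submodule" for m n
    unfolding vr_eq using v_z opw_sing_submodule[OF ks]
    by (simp add: sing_submodule_def vs.span_add vs.span_scale)
  have "v m n (opw \<rho> (k # ks) (detpow \<nu>)) = v a b (v m n ?z)
     + (sc (dlt (n + a = 0) n) (vr m b ?z) + sc (dlt (n + b = 0) n) (vr m a ?z)
     + sc (dlt (m + a = 0) m) (vr b n ?z) + sc (dlt (m + b = 0) m) (vr a n ?z))"
    unfolding k opw_Cons by (rule v_commutator)
  also have "\<dots> \<in> sing_submodule"
    using v_neg_sing_submodule[OF k(2) v_z] vr_z
    unfolding sing_submodule_def by (simp add: vs.span_add vs.span_scale)
  finally show ?case .
qed

lemma sing_submodule_stable: "x \<in> sing_submodule \<Longrightarrow> v m n x \<in> sing_submodule"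
  unfolding sing_submodule_def
  by (rule v_span[rotated]) (use v_opw_sing_submodule in \<open>auto simp: sing_submodule_def\<close>)

lemma sing_submodule_word_span_pos: "sing_submodule \<subseteq> word_span_pos"
proof -
  obtain i where i: "\<nu> = Suc i" using \<nu>_pos by (cases \<nu>) auto
  have "opw \<rho> ks (detpow \<nu>) \<in> word_span_pos" if "neg_word ks" for ks
    using that
  proof (induct ks)
    case Nil then show ?case using detop_word_span_pos[OF detpow_word_span] by (simp add: i detpow_Suc)
  next
    case (Cons k ks)
    then show ?case
      using v_word_span_pos word_span_pos_subset unfolding neg_word_def by auto
  qed
  then show ?thesis
    unfolding sing_submodule_def word_span_pos_def by (intro vs.span_minimal) (auto simp: word_span_pos_def)
qed

lemma sing_submodule_least:
  assumes W: "vs.subspace W" "w \<in> W" "stable1 \<rho> W"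
  shows "sing_submodule \<subseteq> W"
proof -
  have v_W: "v a b x \<in> W" if "x \<in> W" "a + b < 0" for a b x
  proof (cases "a \<le> b")
    case True then show ?thesis using W(3) that unfolding stable1_def by blast
  next
    case False
    then have "v b a x \<in> W" using W(3) that unfolding stable1_def by auto
    moreover have "v a b = v b a" using that by (intro v_swap) simp
    ultimately show ?thesis by (simp only:)
  qed
  have vmon_W: "vmon M x \<in> W" if "x \<in> W" for M x
    using that by (induct M arbitrary: x) (simp_all add: vneg_def v_W)
  have detop_W: "detop x \<in> W" if "x \<in> W" for x
    unfolding detop_def vperm_def
    by (intro vs.subspace_sum[OF W(1)] vs.subspace_scale[OF W(1)] vmon_W that)
  have "detpow i \<in> W" for i
    by (induct i) (simp_all add: detpow_0 detpow_Suc W(2) detop_W)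
  then have "opw \<rho> ks (detpow \<nu>) \<in> W" if "neg_word ks" for ks
    using that by (induct ks) (auto simp: neg_word_def v_W)
  then show ?thesis
    unfolding sing_submodule_def by (intro vs.span_minimal) (use W(1) in auto)
qed

lemma Mone_reducible: "reducible1 sc \<rho> (Mone sc \<rho> w)"
  unfolding reducible1_def
proof (intro exI conjI)
  show "vs.subspace sing_submodule" unfolding sing_submodule_def by simp
  show "sing_submodule \<subseteq> Mone sc \<rho> w" unfolding Mone_def using sing_submodule_least by blast
  show "stable1 \<rho> sing_submodule" unfolding stable1_def using sing_submodule_stable by blast
  show "sing_submodule \<noteq> {0}" using detpow_sing_submodule detpow_nonzero by blast
  have "w \<in> Mone sc \<rho> w" unfolding Mone_def by blast
  then show "sing_submodule \<noteq> Mone sc \<rho> w"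
    using sing_submodule_word_span_pos w_notin_word_span_pos by blast
qed

end

end

theorem proposition6p1:
  fixes d :: nat and r :: int and \<nu> p :: nat
    and sc :: "complex \<Rightarrow> 'v::ab_group_add \<Rightarrow> 'v"
    and \<rho> :: "key \<Rightarrow> 'v \<Rightarrow> 'v" and w :: 'v
  assumes "d \<ge> 2" and "\<nu> \<ge> 1" and "p \<ge> 1"
    and "r = 1 - 2 * int \<nu> + int p"
    and "Mr_model d (of_int r) sc \<rho> w"
  shows "(\<forall>m n. m + n > 0 \<longrightarrow> \<rho> (1,1,m,n) ((detV sc \<rho> p ^^ \<nu>) w) = 0)
         \<and> reducible1 sc \<rho> (Mone sc \<rho> w)"
proof -
  interpret det_module d "of_int r" sc \<rho> w p
    by unfold_locales (use assms in auto)
  have r: "(of_int r :: complex) = 1 - 2 * of_nat \<nu> + of_nat p" using assms(4) by simp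
  have "(detV sc \<rho> p ^^ \<nu>) w = detpow \<nu>" unfolding detV_eq_detop detpow_def ..
  then show ?thesis using detpow_singular[OF assms(2) r] Mone_reducible[OF assms(2) r] by simp
qed

end
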